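(* Let the setting described in the context hold, with the sequential transmission protocol (TP1). Then for every $t\in\{0,\kappa,2\kappa,\ldots\}$ the finite-horizon optimal control problem $$\min_{\eta_t,\Theta_t}\ \mathbb{E}_{x_t}\big[x_{t:N+1}^\top\mathcal{Q}x_{t:N+1}+(u^a_{t:N})^\top\mathcal{R}u^a_{t:N}\big]$$ subject to $x_{t:N+1}=\mathcal{A}x_t+\mathcal{B}u^a_{t:N}+\mathcal{D}w_{t:N}$, $u^a_{t:N}=\mathcal{S}\eta_t+\mathcal{S}\Theta_t\varphi(w_{t:N-1})$, and $u_s\in\mathbb{U}$ for all $s$, is convex and feasible, and it can be rewritten as the following tractable program with tightened constraints: $$\min_{\eta_t,\Theta_t}\ 2\,\mathrm{tr}\big(\Theta_t^\top\mu_{\mathcal{S}}^\top\mathcal{B}^\top\mathcal{Q}\mathcal{D}\Sigma'_{\varphi}\big)+2x_t^\top\mathcal{A}^\top\mathcal{Q}\mathcal{B}\mu_{\mathcal{S}}\eta_t+\mathrm{tr}\big(\eta_t^\top\Sigma_{\mathcal{S}}\eta_t\big)+\mathrm{tr}\big(\Theta_t^\top\Sigma_{\mathcal{S}}\Theta_t\Sigma_{\varphi}\big)+c_t$$ subject to: $\Theta_t$ has the strictly lower block triangular structure described in the context, and $|\eta_t^{(i)}|+\|\Theta_t^{(i)}\|_1\varphi_{\max}\le U_{\max}$ for all $i=1,\ldots,Nm$, where $\eta_t^{(i)}$ is the $i$-th component of $\eta_t$ and $\Theta_t^{(i)}$ the $i$-th row of $\Theta_t$.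
   Context: System: $x_{t+1}=Ax_t+Bu^a_t+w_t$, $x_0=\bar x\in\mathbb{R}^d$, with $A\in\mathbb{R}^{d\times d}$, $B\in\mathbb{R}^{m\times m}$-compatible matrix $B\in\mathbb{R}^{d\times m}$. $(w_t)_{t\in\mathbb{N}}$ is an i.i.d. sequence of zero-mean $\mathbb{R}^d$-valued random vectors with bounded fourth moments, each component of $w_t$ symmetrically distributed about the origin. The state is measured perfectly at every time and the sensor-to-controller channel is noiseless. Controls must lie in $\mathbb{U}=\{v\in\mathbb{R}^m:\|v\|_\infty\le U_{\max}\}$, $U_{\max}>0$. The computed control $u_t$ is sent over an erasure channel to the actuator; $(\nu_t)_{t\in\mathbb{N}}$ is an i.i.d. Bernoulli $\{0,1\}$ sequence with $\mathbb{E}[\nu_t]=p\in\,]0,1]$, independent of $(w_t)$; $\nu_t=1$ means successful transmission and $\nu_t=0$ a dropout. Acknowledgements are available to the controller, so $w_t=x_{t+1}-Ax_t-Bu^a_t$ is known to the controller at time $t+1$. $u^a_t$ denotes the control actually applied at the actuator. Notation: for a sequence $(s_n)$, $s_{n:k}=(s_n^\top,\ldots,s_{n+k-1}^\top)^\top$. Fix a horizon $N\in\mathbb{N}$ and an integer $\kappa\in\{1,\ldots,N\}$ (the recalculation interval). $Q,Q_f\in\mathbb{R}^{d\times d}$ are symmetric positive semidefinite and $R\in\mathbb{R}^{m\times m}$ symmetric positive definite; $\mathcal{Q}=\mathrm{blkdiag}(Q,\ldots,Q,Q_f)$ ($N$ copies of $Q$), $\mathcal{R}=\mathrm{blkdiag}(R,\ldots,R)$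 ($N$ copies). $\mathcal{A}=(I_d;A;\ldots;A^N)\in\mathbb{R}^{(N+1)d\times d}$; $\mathcal{B}\in\mathbb{R}^{(N+1)d\times Nm}$ has block $(i,j)$ ($i=0,\ldots,N$, $j=1,\ldots,N$) equal to $A^{i-j}B$ if $i\ge j$ and $0$ otherwise; $\mathcal{D}\in\mathbb{R}^{(N+1)d\times Nd}$ has block $(i,j)$ equal to $A^{i-j}$ if $i\ge j$ and $0$ otherwise. Policy class: $u_{t:N}=\eta_t+\Theta_t\varphi(w_{t:N-1})$, i.e. $u_{t+\ell}=\eta_{t+\ell}+\sum_{i=0}^{\ell-1}\theta_{\ell,t+i}\varphi_{i+1}(w_{t+i})$, $\ell=0,\ldots,N-1$, where $\eta_t=(\eta_t^\top,\ldots,\eta_{t+N-1}^\top)^\top\in\mathbb{R}^{Nm}$, $\varphi(w_{t:N-1})=(\varphi_1(w_t)^\top,\ldots,\varphi_{N-1}(w_{t+N-2})^\top)^\top$ with each $\varphi_i:\mathbb{R}^d\to\mathbb{R}^d$ a measurable saturation-type map symmetric about the origin with $\mathbb{E}[\varphi_i(w_{t+i-1})]=0$ and $\|\varphi(w_{t:N-1})\|_\infty\le\varphi_{\max}$; $\Theta_t\in\mathbb{R}^{Nm\times(N-1)d}$ is strictly lower block triangular: its block row $\ell$ ($\ell=0,\ldots,N-1$) is $(\theta_{\ell,t},\ldots,\theta_{\ell,t+\ell-1},0,\ldots,0)$ with $\theta_{\ell,s}\in\mathbb{R}^{m\times d}$ (block row $0$ is zero). Protocol TP1 (sequential transmission):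 the control value $u_s$ is transmitted at every step; if lost, zero control is applied. Hence $u^a_{t:N}=\mathcal{S}\eta_t+\mathcal{S}\Theta_t\varphi(w_{t:N-1})$ with $\mathcal{S}=\mathrm{blkdiag}(\nu_tI_m,\ldots,\nu_{t+\kappa-1}I_m,I_{m(N-\kappa)})$. Quantities: $\Sigma_\varphi=\mathbb{E}[\varphi(w_{t:N-1})\varphi(w_{t:N-1})^\top]$, $\Sigma'_\varphi=\mathbb{E}[w_{t:N}\varphi(w_{t:N-1})^\top]$, $\Sigma_W=\mathbb{E}[w_{t:N}w_{t:N}^\top]$, $\mu_{\mathcal{S}}=\mathbb{E}[\mathcal{S}]$, $\Sigma_{\mathcal{S}}=\mathbb{E}[\mathcal{S}^\top(\mathcal{B}^\top\mathcal{Q}\mathcal{B}+\mathcal{R})\mathcal{S}]$, $c_t=x_t^\top\mathcal{A}^\top\mathcal{Q}\mathcal{A}x_t+\mathrm{tr}(\mathcal{D}^\top\mathcal{Q}\mathcal{D}\Sigma_W)$. $\mathbb{E}_{x_t}$ denotes expectation conditional on $x_t$. *)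

theory Defs
  imports "HOL-Probability.Probability" "Jordan_Normal_Form.Matrix"
begin

text \<open>Dimensions: d = state dimension, m = input dimension, N = horizon,
  kappa = recalculation interval.  Stacked vectors/block matrices are Jordan_Normal_Form
  vectors/matrices whose entries are laid out block by block (block k of a stacked vector
  with blocks of size n occupies entries k*n .. k*n+n-1).  Noise samples w s omega are
  functions nat => real of which only the components 0..d-1 are relevant.\<close>

definition mtrace :: "real mat \<Rightarrow> real" where
  "mtrace X = (\<Sum>i<dim_row X. X $$ (i,i))"

definition outer :: "real Matrix.vec \<Rightarrow> real Matrix.vec \<Rightarrow> real mat" where
  "outer v u = Matrix.mat (dim_vec v) (dim_vec u) (\<lambda>(i,j). v $ i * u $ j)"

definition mat_expect :: "'w measure \<Rightarrow> nat \<Rightarrow> nat \<Rightarrow> ('w \<Rightarrow> real mat) \<Rightarrow> real mat" where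
  "mat_expect M nr nc F = Matrix.mat nr nc (\<lambda>(i,j). \<integral>\<omega>. F \<omega> $$ (i,j) \<partial>M)"

definition calA :: "nat \<Rightarrow> nat \<Rightarrow> real mat \<Rightarrow> real mat" where
  "calA d N A = Matrix.mat (Suc N * d) d (\<lambda>(i,j). (A ^\<^sub>m (i div d)) $$ (i mod d, j))"

text \<open>calB: block (i,j), i = 0..N, j = 1..N, equals A^(i-j) B if i >= j, else 0.
  Column block with 0-based index jb corresponds to j = jb + 1.\<close>
definition calB :: "nat \<Rightarrow> nat \<Rightarrow> nat \<Rightarrow> real mat \<Rightarrow> real mat \<Rightarrow> real mat" where
  "calB d m N A B = Matrix.mat (Suc N * d) (N * m) (\<lambda>(i,j).
     if j div m < i div d then (A ^\<^sub>m (i div d - j div m - 1) * B) $$ (i mod d, j mod m) else 0)"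

definition calD :: "nat \<Rightarrow> nat \<Rightarrow> real mat \<Rightarrow> real mat" where
  "calD d N A = Matrix.mat (Suc N * d) (N * d) (\<lambda>(i,j).
     if j div d < i div d then (A ^\<^sub>m (i div d - j div d - 1)) $$ (i mod d, j mod d) else 0)"

definition calQ :: "nat \<Rightarrow> nat \<Rightarrow> real mat \<Rightarrow> real mat \<Rightarrow> real mat" where
  "calQ d N Q Qf = Matrix.mat (Suc N * d) (Suc N * d) (\<lambda>(i,j).
     if i div d = j div d then (if i div d < N then Q else Qf) $$ (i mod d, j mod d) else 0)"

definition calR :: "nat \<Rightarrow> nat \<Rightarrow> real mat \<Rightarrow> real mat" where
  "calR m N R = Matrix.mat (N * m) (N * m) (\<lambda>(i,j).
     if i div m = j div m then R $$ (i mod m, j mod m) else 0)"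

definition Smat :: "nat \<Rightarrow> nat \<Rightarrow> nat \<Rightarrow> (nat \<Rightarrow> 'w \<Rightarrow> real) \<Rightarrow> nat \<Rightarrow> 'w \<Rightarrow> real mat" where
  "Smat m N \<kappa> \<nu> t \<omega> = Matrix.mat (N * m) (N * m) (\<lambda>(i,j).
     if i = j then (if i div m < \<kappa> then \<nu> (t + i div m) \<omega> else 1) else 0)"

definition Wstack :: "nat \<Rightarrow> nat \<Rightarrow> (nat \<Rightarrow> 'w \<Rightarrow> nat \<Rightarrow> real) \<Rightarrow> nat \<Rightarrow> 'w \<Rightarrow> real Matrix.vec" where
  "Wstack d N w t \<omega> = Matrix.vec (N * d) (\<lambda>k. w (t + k div d) \<omega> (k mod d))"

definition Phistack :: "nat \<Rightarrow> nat \<Rightarrow> (nat \<Rightarrow> (nat \<Rightarrow> real) \<Rightarrow> nat \<Rightarrow> real)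
    \<Rightarrow> (nat \<Rightarrow> 'w \<Rightarrow> nat \<Rightarrow> real) \<Rightarrow> nat \<Rightarrow> 'w \<Rightarrow> real Matrix.vec" where
  "Phistack d N \<phi> w t \<omega> = Matrix.vec ((N - 1) * d)
     (\<lambda>k. \<phi> (Suc (k div d)) (restrict (w (t + k div d) \<omega>) {..<d}) (k mod d))"

definition strict_lower_block :: "nat \<Rightarrow> nat \<Rightarrow> nat \<Rightarrow> real mat \<Rightarrow> bool" where
  "strict_lower_block d m N \<Theta> \<longleftrightarrow>
     (\<forall>i < N * m. \<forall>j < (N - 1) * d. \<not> (j div d < i div m) \<longrightarrow> \<Theta> $$ (i,j) = 0)"

definition ctrl where
  "ctrl d N \<phi> w t \<eta> \<Theta> \<omega> = \<eta> + mult_mat_vec \<Theta> (Phistack d N \<phi> w t \<omega>)"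

definition ctrl_applied where
  "ctrl_applied d m N \<kappa> \<phi> w \<nu> t \<eta> \<Theta> \<omega> =
     mult_mat_vec (Smat m N \<kappa> \<nu> t \<omega>) (ctrl d N \<phi> w t \<eta> \<Theta> \<omega>)"

definition state_stack where
  "state_stack d m N \<kappa> A B \<phi> w \<nu> t x \<eta> \<Theta> \<omega> =
     mult_mat_vec (calA d N A) x
     + mult_mat_vec (calB d m N A B) (ctrl_applied d m N \<kappa> \<phi> w \<nu> t \<eta> \<Theta> \<omega>)
     + mult_mat_vec (calD d N A) (Wstack d N w t \<omega>)"

definition stage_cost where
  "stage_cost d m N \<kappa> A B Q Qf R \<phi> w \<nu> t x \<eta> \<Theta> \<omega> =
     (let xs = state_stack d m N \<kappa> A B \<phi> w \<nu> t x \<eta> \<Theta> \<omega>;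
          ua = ctrl_applied d m N \<kappa> \<phi> w \<nu> t \<eta> \<Theta> \<omega>
      in scalar_prod xs (mult_mat_vec (calQ d N Q Qf) xs)
         + scalar_prod ua (mult_mat_vec (calR m N R) ua))"

definition feasible_set where
  "feasible_set M d m N Umax \<phi> w t =
     {(\<eta>, \<Theta>). \<eta> \<in> carrier_vec (N * m) \<and> \<Theta> \<in> carrier_mat (N * m) ((N - 1) * d)
        \<and> strict_lower_block d m N \<Theta>
        \<and> (AE \<omega> in M. \<forall>i < N * m. \<bar>ctrl d N \<phi> w t \<eta> \<Theta> \<omega> $ i\<bar> \<le> Umax)}"

definition comb :: "real \<Rightarrow> real Matrix.vec \<times> real mat \<Rightarrow> real Matrix.vec \<times> real mat
    \<Rightarrow> real Matrix.vec \<times> real mat" where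
  "comb l a b = (smult_vec l (fst a) + smult_vec (1 - l) (fst b),
                 smult_mat l (snd a) + smult_mat (1 - l) (snd b))"

definition convex_problem where
  "convex_problem F J \<longleftrightarrow>
     (\<forall>a \<in> F. \<forall>b \<in> F. \<forall>l::real. 0 \<le> l \<and> l \<le> 1 \<longrightarrow>
        comb l a b \<in> F \<and> J (comb l a b) \<le> l * J a + (1 - l) * J b)"

definition tractable_obj where
  "tractable_obj M d m N \<kappa> A B Q Qf R \<phi> w \<nu> t x \<eta> \<Theta> =
    (let cA = calA d N A; cB = calB d m N A B; cD = calD d N A; cQ = calQ d N Q Qf;
         cR = calR m N R;
         muS = mat_expect M (N * m) (N * m) (Smat m N \<kappa> \<nu> t);
         SigS = mat_expect M (N * m) (N * m)
                  (\<lambda>\<omega>. (Smat m N \<kappa> \<nu> t \<omega>)\<^sup>T * (cB\<^sup>T * cQ * cB + cR) * Smat m N \<kappa> \<nu> t \<omega>);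
         SigPhi = mat_expect M ((N - 1) * d) ((N - 1) * d)
                  (\<lambda>\<omega>. outer (Phistack d N \<phi> w t \<omega>) (Phistack d N \<phi> w t \<omega>));
         SigPhi' = mat_expect M (N * d) ((N - 1) * d)
                  (\<lambda>\<omega>. outer (Wstack d N w t \<omega>) (Phistack d N \<phi> w t \<omega>));
         SigW = mat_expect M (N * d) (N * d)
                  (\<lambda>\<omega>. outer (Wstack d N w t \<omega>) (Wstack d N w t \<omega>));
         c = scalar_prod x (mult_mat_vec (cA\<^sup>T * cQ * cA) x) + mtrace (cD\<^sup>T * cQ * cD * SigW)
     in 2 * mtrace (\<Theta>\<^sup>T * muS\<^sup>T * cB\<^sup>T * cQ * cD * SigPhi')
        + 2 * scalar_prod x (mult_mat_vec (cA\<^sup>T * cQ * cB * muS) \<eta>)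
        + scalar_prod \<eta> (mult_mat_vec SigS \<eta>)
        + mtrace (\<Theta>\<^sup>T * SigS * \<Theta> * SigPhi)
        + c)"

definition tightened where
  "tightened d m N Umax \<phi>max \<eta> \<Theta> \<longleftrightarrow>
     (\<forall>i < N * m. \<bar>\<eta> $ i\<bar> + (\<Sum>j < (N - 1) * d. \<bar>\<Theta> $$ (i,j)\<bar>) * \<phi>max \<le> Umax)"

end

theory Submission
  imports Defs
begin

text \<open>For a fixed outcome, the applied controls \<open>S (\<eta> + \<Theta> \<phi>(w))\<close> and hence the stacked states are
  affine in the decision variables \<open>(\<eta>, \<Theta>)\<close>, and the cost is a positive semidefinite quadratic form
  of them; so the cost is convex pointwise and its expectation is convex, while the input constraints
  are convex constraints on \<open>\<eta> + \<Theta> \<phi>(w)\<close>.  The bound \<open>|\<phi>| \<le> \<phi>max\<close> gives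
  \<open>|u\<^sub>i| \<le> |\<eta>\<^sub>i| + \<parallel>\<Theta>\<^sub>i\<parallel>\<^sub>1 \<phi>max\<close>, which makes the tightened constraints sufficient.
  For the expectation, the cost is expanded entrywise: \<open>S\<close> depends only on the dropouts, which are
  independent of the noise, so every moment factors into a moment of \<open>S\<close> times a moment of
  \<open>(w, \<phi>(w))\<close>; the zero means of \<open>w\<close> and \<open>\<phi>(w)\<close> remove the linear terms, and the remaining sums
  reassemble into the traces of the tractable objective.  Only this independence, the zero means,
  the fourth moments (making \<open>w\<close> square integrable) and the bound on \<open>\<phi>\<close> are used.\<close>

lemma sum_sum_bilinear_reorder:
  fixes Q X Y c :: "nat \<Rightarrow> nat \<Rightarrow> real"
  assumes "finite A" "finite B" "finite I" "finite J"
  shows "(\<Sum>a\<in>A. \<Sum>b\<in>B. Q a b * (\<Sum>i\<in>I. \<Sum>j\<in>J. (X a i * Y b j) * c i j))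
   = (\<Sum>i\<in>I. \<Sum>j\<in>J. (\<Sum>a\<in>A. \<Sum>b\<in>B. X a i * Q a b * Y b j) * c i j)"
proof -
  have "(\<Sum>a\<in>A. \<Sum>b\<in>B. Q a b * (\<Sum>i\<in>I. \<Sum>j\<in>J. (X a i * Y b j) * c i j))
     = (\<Sum>a\<in>A. \<Sum>b\<in>B. \<Sum>i\<in>I. \<Sum>j\<in>J. X a i * Q a b * Y b j * c i j)"
    by (simp add: sum_distrib_left mult_ac)
  also have "\<dots> = (\<Sum>a\<in>A. \<Sum>i\<in>I. \<Sum>b\<in>B. \<Sum>j\<in>J. X a i * Q a b * Y b j * c i j)"
    by (rule sum.cong[OF refl], rule sum.swap)
  also have "\<dots> = (\<Sum>i\<in>I. \<Sum>a\<in>A. \<Sum>b\<in>B. \<Sum>j\<in>J. X a i * Q a b * Y b j * c i j)"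
    by (rule sum.swap)
  also have "\<dots> = (\<Sum>i\<in>I. \<Sum>a\<in>A. \<Sum>j\<in>J. \<Sum>b\<in>B. X a i * Q a b * Y b j * c i j)"
    by (rule sum.cong[OF refl], rule sum.cong[OF refl], rule sum.swap)
  also have "\<dots> = (\<Sum>i\<in>I. \<Sum>j\<in>J. \<Sum>a\<in>A. \<Sum>b\<in>B. X a i * Q a b * Y b j * c i j)"
    by (rule sum.cong[OF refl], rule sum.swap)
  also have "\<dots> = (\<Sum>i\<in>I. \<Sum>j\<in>J. (\<Sum>a\<in>A. \<Sum>b\<in>B. X a i * Q a b * Y b j) * c i j)"
    by (simp add: sum_distrib_right)
  finally show ?thesis .
qed

lemma sum_sum_product_reorder:
  fixes Q X Y :: "nat \<Rightarrow> nat \<Rightarrow> real"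
  assumes "finite A" "finite B" "finite I" "finite J"
  shows "(\<Sum>a\<in>A. \<Sum>b\<in>B. Q a b * ((\<Sum>i\<in>I. X a i * f i) * (\<Sum>j\<in>J. Y b j * g j)))
   = (\<Sum>i\<in>I. \<Sum>j\<in>J. (\<Sum>a\<in>A. \<Sum>b\<in>B. X a i * Q a b * Y b j) * (f i * g j))"
proof -
  have "(\<Sum>a\<in>A. \<Sum>b\<in>B. Q a b * ((\<Sum>i\<in>I. X a i * f i) * (\<Sum>j\<in>J. Y b j * g j)))
     = (\<Sum>a\<in>A. \<Sum>b\<in>B. Q a b * (\<Sum>i\<in>I. \<Sum>j\<in>J. (X a i * Y b j) * (f i * g j)))"
    by (simp add: sum_product mult_ac)
  then show ?thesis using sum_sum_bilinear_reorder[OF assms, of Q X Y "\<lambda>i j. f i * g j"] by simp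
qed

lemma index_mult_mat_vec_sum: "i < dim_row A \<Longrightarrow> dim_vec v = dim_col A \<Longrightarrow> (A *\<^sub>v v) $ i = (\<Sum>j<dim_col A. A $$ (i,j) * v $ j)"
  by (simp add: scalar_prod_def atLeast0LessThan)

lemma index_mult_mat_sum: "i < dim_row A \<Longrightarrow> j < dim_col B \<Longrightarrow> dim_col A = dim_row B \<Longrightarrow>
   (A * B) $$ (i,j) = (\<Sum>k<dim_col A. A $$ (i,k) * B $$ (k,j))"
  by (simp add: scalar_prod_def atLeast0LessThan)

lemma index_transpose_mult_mult:
  fixes X :: "real mat"
  assumes "X \<in> carrier_mat nb n1" "Q \<in> carrier_mat nb nb" "Y \<in> carrier_mat nb n2" "i < n1" "j < n2"
  shows "(X\<^sup>T * Q * Y) $$ (i,j) = (\<Sum>a<nb. \<Sum>b<nb. X $$ (a,i) * Q $$ (a,b) * Y $$ (b,j))"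
proof -
  have "(X\<^sup>T * Q * Y) $$ (i,j) = (\<Sum>b<nb. (X\<^sup>T * Q) $$ (i,b) * Y $$ (b,j))"
    using assms by (subst index_mult_mat_sum) auto
  also have "\<dots> = (\<Sum>b<nb. (\<Sum>a<nb. X $$ (a,i) * Q $$ (a,b)) * Y $$ (b,j))"
    using assms by (intro sum.cong refl) (subst index_mult_mat_sum, auto)
  also have "\<dots> = (\<Sum>b<nb. \<Sum>a<nb. X $$ (a,i) * Q $$ (a,b) * Y $$ (b,j))"
    by (simp add: sum_distrib_right)
  also have "\<dots> = (\<Sum>a<nb. \<Sum>b<nb. X $$ (a,i) * Q $$ (a,b) * Y $$ (b,j))"
    by (rule sum.swap)
  finally show ?thesis .
qed

lemma mtrace_mult_sum:
  fixes X :: "real mat"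
  assumes "X \<in> carrier_mat n1 n2" "Y \<in> carrier_mat n2 n1"
  shows "mtrace (X * Y) = (\<Sum>i<n1. \<Sum>k<n2. X $$ (i,k) * Y $$ (k,i))"
proof -
  have "mtrace (X * Y) = (\<Sum>i<n1. (X * Y) $$ (i,i))" unfolding mtrace_def using assms by simp
  also have "\<dots> = (\<Sum>i<n1. \<Sum>k<n2. X $$ (i,k) * Y $$ (k,i))"
    using assms by (intro sum.cong refl) (subst index_mult_mat_sum, auto)
  finally show ?thesis .
qed

lemma scalar_prod_mult_mat_vec_sum:
  fixes G :: "real mat"
  assumes "x \<in> carrier_vec n1" "G \<in> carrier_mat n1 n2" "y \<in> carrier_vec n2"
  shows "x \<bullet> (G *\<^sub>v y) = (\<Sum>i<n1. \<Sum>j<n2. G $$ (i,j) * (x $ i * y $ j))"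
proof -
  have "x \<bullet> (G *\<^sub>v y) = (\<Sum>i<n1. x $ i * (G *\<^sub>v y) $ i)"
    unfolding scalar_prod_def using assms by (simp add: atLeast0LessThan)
  also have "\<dots> = (\<Sum>i<n1. x $ i * (\<Sum>j<n2. G $$ (i,j) * y $ j))"
    using assms by (intro sum.cong refl) (subst index_mult_mat_vec_sum, auto)
  also have "\<dots> = (\<Sum>i<n1. \<Sum>j<n2. G $$ (i,j) * (x $ i * y $ j))"
    by (simp add: sum_distrib_left mult.left_commute)
  finally show ?thesis .
qed

lemma index_mat_expect: "i < nr \<Longrightarrow> j < nc \<Longrightarrow> mat_expect M nr nc F $$ (i,j) = (\<integral>\<omega>. F \<omega> $$ (i,j) \<partial>M)"
  unfolding mat_expect_def by simp

lemma dim_mat_expect[simp]: "dim_row (mat_expect M nr nc F) = nr" "dim_col (mat_expect M nr nc F) = nc"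
  unfolding mat_expect_def by simp_all

lemma index_outer: "i < dim_vec v \<Longrightarrow> j < dim_vec u \<Longrightarrow> outer v u $$ (i,j) = v $ i * u $ j"
  unfolding outer_def by simp

lemma sum_sum_symmetric_swap:
  fixes F :: "nat \<Rightarrow> nat \<Rightarrow> real"
  assumes "\<And>a b. a < nb \<Longrightarrow> b < nb \<Longrightarrow> C b a = C a b"
  shows "(\<Sum>a<nb. \<Sum>b<nb. C a b * F b a) = (\<Sum>a<nb. \<Sum>b<nb. C a b * F a b)"
proof -
  have "(\<Sum>a<nb. \<Sum>b<nb. C a b * F b a) = (\<Sum>b<nb. \<Sum>a<nb. C a b * F b a)" by (rule sum.swap)
  also have "\<dots> = (\<Sum>b<nb. \<Sum>a<nb. C b a * F b a)" using assms by (intro sum.cong refl) auto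
  finally show ?thesis .
qed

lemma sum_quadratic_form_mult_mat_vec:
  fixes cA cQ :: "real mat"
  assumes A: "cA \<in> carrier_mat nb d" and Q: "cQ \<in> carrier_mat nb nb" and x: "x \<in> carrier_vec d"
  shows "(\<Sum>a<nb. \<Sum>b<nb. cQ $$ (a,b) * ((cA *\<^sub>v x) $ a * (cA *\<^sub>v x) $ b)) = x \<bullet> ((cA\<^sup>T * cQ * cA) *\<^sub>v x)"
proof -
  have e: "\<And>a. a < nb \<Longrightarrow> (cA *\<^sub>v x) $ a = (\<Sum>p<d. cA $$ (a,p) * x $ p)"
    using A x by (subst index_mult_mat_vec_sum) auto
  have "(\<Sum>a<nb. \<Sum>b<nb. cQ $$ (a,b) * ((cA *\<^sub>v x) $ a * (cA *\<^sub>v x) $ b))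
     = (\<Sum>a<nb. \<Sum>b<nb. cQ $$ (a,b) * ((\<Sum>p<d. cA $$ (a,p) * x $ p) * (\<Sum>p<d. cA $$ (b,p) * x $ p)))"
    by (intro sum.cong refl) (simp add: e)
  also have "\<dots> = (\<Sum>i<d. \<Sum>j<d. (\<Sum>a<nb. \<Sum>b<nb. cA $$ (a,i) * cQ $$ (a,b) * cA $$ (b,j)) * (x $ i * x $ j))"
    by (rule sum_sum_product_reorder) auto
  also have "\<dots> = (\<Sum>i<d. \<Sum>j<d. (cA\<^sup>T * cQ * cA) $$ (i,j) * (x $ i * x $ j))"
    by (intro sum.cong refl) (simp add: index_transpose_mult_mult[OF A Q A])
  also have "\<dots> = x \<bullet> ((cA\<^sup>T * cQ * cA) *\<^sub>v x)"
    by (rule scalar_prod_mult_mat_vec_sum[symmetric]) (use A Q x in auto)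
  finally show ?thesis .
qed

lemma sum_cross_form_diagonal:
  fixes cA cQ cB muS :: "real mat"
  assumes A: "cA \<in> carrier_mat nb d" and Q: "cQ \<in> carrier_mat nb nb" and x: "x \<in> carrier_vec d"
    and B: "cB \<in> carrier_mat nb n" and mu: "muS \<in> carrier_mat n n"
    and mue: "\<And>i j. i < n \<Longrightarrow> j < n \<Longrightarrow> muS $$ (i,j) = (if i = j then Ms i else 0)"
    and eta: "\<eta> \<in> carrier_vec n"
  shows "(\<Sum>a<nb. \<Sum>b<nb. cQ $$ (a,b) * ((cA *\<^sub>v x) $ a * (\<Sum>i<n. cB $$ (b,i) * (Ms i * \<eta> $ i))))
     = x \<bullet> ((cA\<^sup>T * cQ * cB * muS) *\<^sub>v \<eta>)"
proof -
  have e: "\<And>a. a < nb \<Longrightarrow> (cA *\<^sub>v x) $ a = (\<Sum>p<d. cA $$ (a,p) * x $ p)"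
    using A x by (subst index_mult_mat_vec_sum) auto
  have m: "\<And>p i. p < d \<Longrightarrow> i < n \<Longrightarrow> (cA\<^sup>T * cQ * cB * muS) $$ (p,i) = (cA\<^sup>T * cQ * cB) $$ (p,i) * Ms i"
  proof -
    fix p i assume p: "p < d" and i: "i < n"
    have "(cA\<^sup>T * cQ * cB * muS) $$ (p,i) = (\<Sum>k<n. (cA\<^sup>T * cQ * cB) $$ (p,k) * muS $$ (k,i))"
      using A Q B mu p i by (subst index_mult_mat_sum) auto
    also have "\<dots> = (\<Sum>k<n. if k = i then (cA\<^sup>T * cQ * cB) $$ (p,i) * Ms i else 0)"
      by (intro sum.cong refl) (use i in \<open>auto simp: mue\<close>)
    finally show "(cA\<^sup>T * cQ * cB * muS) $$ (p,i) = (cA\<^sup>T * cQ * cB) $$ (p,i) * Ms i" using i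
      by simp
  qed
  have "(\<Sum>a<nb. \<Sum>b<nb. cQ $$ (a,b) * ((cA *\<^sub>v x) $ a * (\<Sum>i<n. cB $$ (b,i) * (Ms i * \<eta> $ i))))
     = (\<Sum>a<nb. \<Sum>b<nb. cQ $$ (a,b) * ((\<Sum>p<d. cA $$ (a,p) * x $ p) * (\<Sum>i<n. cB $$ (b,i) * (Ms i * \<eta> $ i))))"
    by (intro sum.cong refl) (simp add: e)
  also have "\<dots> = (\<Sum>p<d. \<Sum>i<n. (\<Sum>a<nb. \<Sum>b<nb. cA $$ (a,p) * cQ $$ (a,b) * cB $$ (b,i)) * (x $ p * (Ms i * \<eta> $ i)))"
    by (rule sum_sum_product_reorder) auto
  also have "\<dots> = (\<Sum>p<d. \<Sum>i<n. (cA\<^sup>T * cQ * cB * muS) $$ (p,i) * (x $ p * \<eta> $ i))"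
    by (intro sum.cong refl) (simp add: m index_transpose_mult_mult[OF A Q B] mult_ac)
  also have "\<dots> = x \<bullet> ((cA\<^sup>T * cQ * cB * muS) *\<^sub>v \<eta>)"
    by (rule scalar_prod_mult_mat_vec_sum[symmetric]) (use A Q x B mu eta in auto)
  finally show ?thesis .
qed

lemma sum_noise_form_trace:
  fixes cD cQ SW :: "real mat"
  assumes D: "cD \<in> carrier_mat nb r" and Q: "cQ \<in> carrier_mat nb nb" and SW: "SW \<in> carrier_mat r r"
    and swe: "\<And>i j. i < r \<Longrightarrow> j < r \<Longrightarrow> SW $$ (i,j) = E i j"
    and sym: "\<And>i j. E i j = E j i"
  shows "(\<Sum>a<nb. \<Sum>b<nb. cQ $$ (a,b) * (\<Sum>i<r. \<Sum>j<r. (cD $$ (a,i) * cD $$ (b,j)) * E i j))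
     = mtrace (cD\<^sup>T * cQ * cD * SW)"
proof -
  have "(\<Sum>a<nb. \<Sum>b<nb. cQ $$ (a,b) * (\<Sum>i<r. \<Sum>j<r. (cD $$ (a,i) * cD $$ (b,j)) * E i j))
     = (\<Sum>i<r. \<Sum>j<r. (\<Sum>a<nb. \<Sum>b<nb. cD $$ (a,i) * cQ $$ (a,b) * cD $$ (b,j)) * E i j)"
    by (rule sum_sum_bilinear_reorder) auto
  also have "\<dots> = (\<Sum>i<r. \<Sum>j<r. (cD\<^sup>T * cQ * cD) $$ (i,j) * SW $$ (j,i))"
    by (intro sum.cong refl) (simp add: index_transpose_mult_mult[OF D Q D] swe sym)
  also have "\<dots> = mtrace (cD\<^sup>T * cQ * cD * SW)"
    by (rule mtrace_mult_sum[symmetric]) (use D Q SW in auto)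
  finally show ?thesis .
qed

lemma sum_control_forms_trace:
  fixes cB cQ cR SS SP \<Theta> :: "real mat"
  assumes B: "cB \<in> carrier_mat nb n" and Q: "cQ \<in> carrier_mat nb nb" and R: "cR \<in> carrier_mat n n"
    and SS: "SS \<in> carrier_mat n n" and SP: "SP \<in> carrier_mat q q" and Th: "\<Theta> \<in> carrier_mat n q"
    and eta: "\<eta> \<in> carrier_vec n"
    and sse: "\<And>i j. i < n \<Longrightarrow> j < n \<Longrightarrow> SS $$ (i,j) = ((cB\<^sup>T * cQ * cB) $$ (i,j) + cR $$ (i,j)) * Mss i j"
    and spe: "\<And>k l. k < q \<Longrightarrow> l < q \<Longrightarrow> SP $$ (k,l) = E k l"
    and sym: "\<And>k l. E k l = E l k"
  shows "(\<Sum>a<nb. \<Sum>b<nb. cQ $$ (a,b) * (\<Sum>i<n. \<Sum>j<n. (cB $$ (a,i) * cB $$ (b,j)) *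
            (Mss i j * (\<eta> $ i * \<eta> $ j + (\<Sum>k<q. \<Sum>l<q. \<Theta> $$ (i,k) * \<Theta> $$ (j,l) * E k l)))))
       + (\<Sum>i<n. \<Sum>j<n. cR $$ (i,j) * (Mss i j * (\<eta> $ i * \<eta> $ j + (\<Sum>k<q. \<Sum>l<q. \<Theta> $$ (i,k) * \<Theta> $$ (j,l) * E k l))))
     = \<eta> \<bullet> (SS *\<^sub>v \<eta>) + mtrace (\<Theta>\<^sup>T * SS * \<Theta> * SP)"
proof -
  let ?U = "\<lambda>i j. \<eta> $ i * \<eta> $ j + (\<Sum>k<q. \<Sum>l<q. \<Theta> $$ (i,k) * \<Theta> $$ (j,l) * E k l)"
  have "(\<Sum>a<nb. \<Sum>b<nb. cQ $$ (a,b) * (\<Sum>i<n. \<Sum>j<n. (cB $$ (a,i) * cB $$ (b,j)) * (Mss i j * ?U i j)))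
     = (\<Sum>i<n. \<Sum>j<n. (\<Sum>a<nb. \<Sum>b<nb. cB $$ (a,i) * cQ $$ (a,b) * cB $$ (b,j)) * (Mss i j * ?U i j))"
    by (rule sum_sum_bilinear_reorder) auto
  also have "\<dots> = (\<Sum>i<n. \<Sum>j<n. (cB\<^sup>T * cQ * cB) $$ (i,j) * (Mss i j * ?U i j))"
    by (intro sum.cong refl) (simp add: index_transpose_mult_mult[OF B Q B])
  finally have 1: "(\<Sum>a<nb. \<Sum>b<nb. cQ $$ (a,b) * (\<Sum>i<n. \<Sum>j<n. (cB $$ (a,i) * cB $$ (b,j)) * (Mss i j * ?U i j)))
        + (\<Sum>i<n. \<Sum>j<n. cR $$ (i,j) * (Mss i j * ?U i j))
     = (\<Sum>i<n. \<Sum>j<n. SS $$ (i,j) * ?U i j)"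
    by (simp add: sse sum.distrib[symmetric] algebra_simps)
  have 2: "(\<Sum>i<n. \<Sum>j<n. SS $$ (i,j) * ?U i j) = (\<Sum>i<n. \<Sum>j<n. SS $$ (i,j) * (\<eta> $ i * \<eta> $ j))
     + (\<Sum>i<n. \<Sum>j<n. SS $$ (i,j) * (\<Sum>k<q. \<Sum>l<q. (\<Theta> $$ (i,k) * \<Theta> $$ (j,l)) * E k l))"
    by (simp add: sum.distrib[symmetric] algebra_simps)
  have 3: "(\<Sum>i<n. \<Sum>j<n. SS $$ (i,j) * (\<eta> $ i * \<eta> $ j)) = \<eta> \<bullet> (SS *\<^sub>v \<eta>)"
    by (rule scalar_prod_mult_mat_vec_sum[symmetric]) (use SS eta in auto)
  have "(\<Sum>i<n. \<Sum>j<n. SS $$ (i,j) * (\<Sum>k<q. \<Sum>l<q. (\<Theta> $$ (i,k) * \<Theta> $$ (j,l)) * E k l))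
     = (\<Sum>k<q. \<Sum>l<q. (\<Sum>i<n. \<Sum>j<n. \<Theta> $$ (i,k) * SS $$ (i,j) * \<Theta> $$ (j,l)) * E k l)"
    by (rule sum_sum_bilinear_reorder) auto
  also have "\<dots> = (\<Sum>k<q. \<Sum>l<q. (\<Theta>\<^sup>T * SS * \<Theta>) $$ (k,l) * SP $$ (l,k))"
    by (intro sum.cong refl) (simp add: index_transpose_mult_mult[OF Th SS Th] spe sym)
  also have "\<dots> = mtrace (\<Theta>\<^sup>T * SS * \<Theta> * SP)"
    by (rule mtrace_mult_sum[symmetric]) (use Th SS SP in auto)
  finally have 4: "(\<Sum>i<n. \<Sum>j<n. SS $$ (i,j) * (\<Sum>k<q. \<Sum>l<q. (\<Theta> $$ (i,k) * \<Theta> $$ (j,l)) * E k l))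
     = mtrace (\<Theta>\<^sup>T * SS * \<Theta> * SP)" .
  show ?thesis using 1 2 3 4 by (simp add: mult_ac)
qed

lemma mult_transpose_chain_assoc:
  fixes \<Theta> muS cB cQ cD SP' :: "real mat"
  assumes Th: "\<Theta> \<in> carrier_mat n q" and mu: "muS \<in> carrier_mat n n" and B: "cB \<in> carrier_mat nb n"
    and Q: "cQ \<in> carrier_mat nb nb" and D: "cD \<in> carrier_mat nb r" and SP: "SP' \<in> carrier_mat r q"
  shows "\<Theta>\<^sup>T * muS\<^sup>T * cB\<^sup>T * cQ * cD * SP' = \<Theta>\<^sup>T * ((muS\<^sup>T * (cB\<^sup>T * cQ * cD)) * SP')"
proof -
  have c1: "\<Theta>\<^sup>T \<in> carrier_mat q n" "muS\<^sup>T \<in> carrier_mat n n" "cB\<^sup>T \<in> carrier_mat n nb"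
    using Th mu B by auto
  have e1: "\<Theta>\<^sup>T * muS\<^sup>T * cB\<^sup>T = \<Theta>\<^sup>T * (muS\<^sup>T * cB\<^sup>T)"
    by (rule assoc_mult_mat[OF c1])
  have e2: "\<Theta>\<^sup>T * (muS\<^sup>T * cB\<^sup>T) * cQ = \<Theta>\<^sup>T * (muS\<^sup>T * cB\<^sup>T * cQ)"
    by (rule assoc_mult_mat[OF c1(1) _ Q]) (use c1 in auto)
  have e3: "\<Theta>\<^sup>T * (muS\<^sup>T * cB\<^sup>T * cQ) * cD = \<Theta>\<^sup>T * (muS\<^sup>T * cB\<^sup>T * cQ * cD)"
    by (rule assoc_mult_mat[OF c1(1) _ D]) (use c1 Q in auto)
  have e4: "muS\<^sup>T * cB\<^sup>T * cQ = muS\<^sup>T * (cB\<^sup>T * cQ)"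
    by (rule assoc_mult_mat[OF c1(2) c1(3) Q])
  have e5: "muS\<^sup>T * (cB\<^sup>T * cQ) * cD = muS\<^sup>T * (cB\<^sup>T * cQ * cD)"
    by (rule assoc_mult_mat[OF c1(2) _ D]) (use c1 Q in auto)
  have e6: "\<Theta>\<^sup>T * (muS\<^sup>T * (cB\<^sup>T * cQ * cD)) * SP' = \<Theta>\<^sup>T * ((muS\<^sup>T * (cB\<^sup>T * cQ * cD)) * SP')"
    by (rule assoc_mult_mat[OF c1(1) _ SP]) (use c1 Q D in auto)
  show ?thesis using e1 e2 e3 e4 e5 e6 by simp
qed

lemma sum_control_noise_form_trace:
  fixes cB cQ cD muS SP' \<Theta> :: "real mat"
  assumes B: "cB \<in> carrier_mat nb n" and Q: "cQ \<in> carrier_mat nb nb" and D: "cD \<in> carrier_mat nb r"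
    and mu: "muS \<in> carrier_mat n n" and SP: "SP' \<in> carrier_mat r q" and Th: "\<Theta> \<in> carrier_mat n q"
    and mue: "\<And>i j. i < n \<Longrightarrow> j < n \<Longrightarrow> muS $$ (i,j) = (if i = j then Ms i else 0)"
    and spe: "\<And>j l. j < r \<Longrightarrow> l < q \<Longrightarrow> SP' $$ (j,l) = E j l"
  shows "(\<Sum>a<nb. \<Sum>b<nb. cQ $$ (a,b) * (\<Sum>i<n. \<Sum>j<r. (cB $$ (a,i) * cD $$ (b,j)) *
            (Ms i * (\<Sum>k<q. \<Theta> $$ (i,k) * E j k))))
     = mtrace (\<Theta>\<^sup>T * muS\<^sup>T * cB\<^sup>T * cQ * cD * SP')"
proof -
  let ?T = "cB\<^sup>T * cQ * cD"
  have T: "?T \<in> carrier_mat n r" using B Q D by auto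
  have "(\<Sum>a<nb. \<Sum>b<nb. cQ $$ (a,b) * (\<Sum>i<n. \<Sum>j<r. (cB $$ (a,i) * cD $$ (b,j)) *
            (Ms i * (\<Sum>k<q. \<Theta> $$ (i,k) * E j k))))
     = (\<Sum>i<n. \<Sum>j<r. (\<Sum>a<nb. \<Sum>b<nb. cB $$ (a,i) * cQ $$ (a,b) * cD $$ (b,j)) * (Ms i * (\<Sum>k<q. \<Theta> $$ (i,k) * E j k)))"
    by (rule sum_sum_bilinear_reorder) auto
  also have "\<dots> = (\<Sum>i<n. \<Sum>j<r. ?T $$ (i,j) * (Ms i * (\<Sum>k<q. \<Theta> $$ (i,k) * E j k)))"
    by (intro sum.cong refl) (subst index_transpose_mult_mult[OF B Q D], auto)
  also have "\<dots> = (\<Sum>i<n. \<Sum>j<r. \<Sum>k<q. \<Theta> $$ (i,k) * (Ms i * ?T $$ (i,j) * E j k))"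
    by (simp only: sum_distrib_left mult_ac)
  also have "\<dots> = (\<Sum>i<n. \<Sum>k<q. \<Sum>j<r. \<Theta> $$ (i,k) * (Ms i * ?T $$ (i,j) * E j k))"
    by (rule sum.cong[OF refl], rule sum.swap)
  also have "\<dots> = (\<Sum>k<q. \<Sum>i<n. \<Sum>j<r. \<Theta> $$ (i,k) * (Ms i * ?T $$ (i,j) * E j k))"
    by (rule sum.swap)
  finally have L: "(\<Sum>a<nb. \<Sum>b<nb. cQ $$ (a,b) * (\<Sum>i<n. \<Sum>j<r. (cB $$ (a,i) * cD $$ (b,j)) *
            (Ms i * (\<Sum>k<q. \<Theta> $$ (i,k) * E j k))))
     = (\<Sum>k<q. \<Sum>i<n. \<Sum>j<r. \<Theta> $$ (i,k) * (Ms i * ?T $$ (i,j) * E j k))" .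
  have assoc: "\<Theta>\<^sup>T * muS\<^sup>T * cB\<^sup>T * cQ * cD * SP' = \<Theta>\<^sup>T * ((muS\<^sup>T * ?T) * SP')"
    by (rule mult_transpose_chain_assoc[OF Th mu B Q D SP])
  have Z: "\<And>i l. i < n \<Longrightarrow> l < q \<Longrightarrow> ((muS\<^sup>T * ?T) * SP') $$ (i,l) = (\<Sum>j<r. Ms i * ?T $$ (i,j) * E j l)"
  proof -
    fix i l assume i: "i < n" and l: "l < q"
    have "((muS\<^sup>T * ?T) * SP') $$ (i,l) = (\<Sum>j<r. (muS\<^sup>T * ?T) $$ (i,j) * SP' $$ (j,l))"
      using mu T SP i l by (subst index_mult_mat_sum) auto
    also have "\<dots> = (\<Sum>j<r. Ms i * ?T $$ (i,j) * E j l)"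
    proof (intro sum.cong refl)
      fix j assume j: "j \<in> {..<r}"
      have "(muS\<^sup>T * ?T) $$ (i,j) = (\<Sum>k<n. muS\<^sup>T $$ (i,k) * ?T $$ (k,j))"
        using mu T i j by (subst index_mult_mat_sum) auto
      also have "\<dots> = (\<Sum>k<n. if k = i then Ms i * ?T $$ (i,j) else 0)"
        by (intro sum.cong refl) (use mu i in \<open>auto simp: mue\<close>)
      finally have "(muS\<^sup>T * ?T) $$ (i,j) = Ms i * ?T $$ (i,j)" using i by simp
      then show "(muS\<^sup>T * ?T) $$ (i,j) * SP' $$ (j,l) = Ms i * ?T $$ (i,j) * E j l"
        using j l by (simp add: spe)
    qed
    finally show "((muS\<^sup>T * ?T) * SP') $$ (i,l) = (\<Sum>j<r. Ms i * ?T $$ (i,j) * E j l)" .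
  qed
  have "mtrace (\<Theta>\<^sup>T * muS\<^sup>T * cB\<^sup>T * cQ * cD * SP') = mtrace (\<Theta>\<^sup>T * ((muS\<^sup>T * ?T) * SP'))"
    by (simp add: assoc)
  also have "\<dots> = (\<Sum>k<q. \<Sum>i<n. \<Theta>\<^sup>T $$ (k,i) * ((muS\<^sup>T * ?T) * SP') $$ (i,k))"
    by (rule mtrace_mult_sum) (use Th mu T SP in auto)
  also have "\<dots> = (\<Sum>k<q. \<Sum>i<n. \<Sum>j<r. \<Theta> $$ (i,k) * (Ms i * ?T $$ (i,j) * E j k))"
    by (intro sum.cong refl) (use Th in \<open>simp add: Z sum_distrib_left\<close>)
  finally show ?thesis using L by simp
qed

definition bilinear_form :: "(nat \<Rightarrow> nat \<Rightarrow> real) \<Rightarrow> nat \<Rightarrow> (nat \<Rightarrow> real) \<Rightarrow> (nat \<Rightarrow> real) \<Rightarrow> real" where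
  "bilinear_form C n u v = (\<Sum>a<n. u a * (\<Sum>b<n. C a b * v b))"

lemma bilinear_form_left_linear: "bilinear_form C n (\<lambda>a. s * x a + t * y a) v = s * bilinear_form C n x v + t * bilinear_form C n y v"
  unfolding bilinear_form_def by (simp add: algebra_simps sum.distrib sum_distrib_left)

lemma bilinear_form_right_linear: "bilinear_form C n u (\<lambda>a. s * x a + t * y a) = s * bilinear_form C n u x + t * bilinear_form C n u y"
  unfolding bilinear_form_def by (simp add: algebra_simps sum.distrib sum_distrib_left)

lemma bilinear_form_cong: "(\<And>a. a < n \<Longrightarrow> f a = f' a) \<Longrightarrow> bilinear_form C n f f = bilinear_form C n f' f'"
  unfolding bilinear_form_def by (intro sum.cong refl) auto

lemma quadratic_form_convex:
  assumes psd: "\<And>v. 0 \<le> bilinear_form C n v v" and l: "0 \<le> l" "l \<le> 1"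
  shows "bilinear_form C n (\<lambda>a. l * x a + (1 - l) * y a) (\<lambda>a. l * x a + (1 - l) * y a)
     \<le> l * bilinear_form C n x x + (1 - l) * bilinear_form C n y y"
proof -
  let ?z = "\<lambda>a. l * x a + (1 - l) * y a"
  have z: "bilinear_form C n ?z ?z = l * (l * bilinear_form C n x x + (1 - l) * bilinear_form C n x y) + (1 - l) * (l * bilinear_form C n y x + (1 - l) * bilinear_form C n y y)"
    by (simp add: bilinear_form_left_linear bilinear_form_right_linear)
  have dd: "bilinear_form C n (\<lambda>a. 1 * x a + (- 1) * y a) (\<lambda>a. 1 * x a + (- 1) * y a)
       = bilinear_form C n x x - bilinear_form C n x y - bilinear_form C n y x + bilinear_form C n y y"
    by (simp only: bilinear_form_left_linear bilinear_form_right_linear) (simp add: algebra_simps)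
  have "0 \<le> bilinear_form C n (\<lambda>a. 1 * x a + (- 1) * y a) (\<lambda>a. 1 * x a + (- 1) * y a)"
    by (rule psd)
  then have p: "0 \<le> bilinear_form C n x x - bilinear_form C n x y - bilinear_form C n y x + bilinear_form C n y y" using dd
    by simp
  have "0 \<le> l * (1 - l)" using l by simp
  then have "0 \<le> (l * (1 - l)) * (bilinear_form C n x x - bilinear_form C n x y - bilinear_form C n y x + bilinear_form C n y y)"
    using p by (rule mult_nonneg_nonneg)
  moreover have "l * bilinear_form C n x x + (1 - l) * bilinear_form C n y y - bilinear_form C n ?z ?z
      = (l * (1 - l)) * (bilinear_form C n x x - bilinear_form C n x y - bilinear_form C n y x + bilinear_form C n y y)"
    unfolding z by (simp add: algebra_simps)
  ultimately show ?thesis by linarith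
qed

lemma sum_lessThan_mult_blocks:
  fixes K d :: nat and f :: "nat \<Rightarrow> 'a::comm_monoid_add"
  shows "(\<Sum>a<K * d. f a) = (\<Sum>k<K. \<Sum>i<d. f (k * d + i))"
proof (induction K)
  case 0 then show ?case by simp
next
  case (Suc K)
  have "(\<Sum>a<Suc K * d. f a) = (\<Sum>a\<in>{0..<K * d}. f a) + (\<Sum>a\<in>{K * d..<K * d + d}. f a)"
    by (simp add: atLeast0LessThan[symmetric] sum.atLeastLessThan_concat add.commute)
  also have "(\<Sum>a\<in>{K * d..<K * d + d}. f a) = (\<Sum>i<d. f (K * d + i))"
    using sum.shift_bounds_nat_ivl[of f 0 "K * d" d] by (simp add: atLeast0LessThan add.commute)
  finally show ?case using Suc by (simp add: atLeast0LessThan)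
qed

lemma block_index_less: "k < K \<Longrightarrow> i < d \<Longrightarrow> k * d + i < K * (d::nat)"
proof -
  assume "k < K" "i < d"
  then have "k * d + i < Suc k * d" by simp
  also have "\<dots> \<le> K * d" using \<open>k < K\<close> by (intro mult_right_mono) auto
  finally show ?thesis .
qed

lemma block_diagonal_psd:
  fixes Mk :: "nat \<Rightarrow> real mat" and C :: "nat \<Rightarrow> nat \<Rightarrow> real"
  assumes Mc: "\<And>k. k < K \<Longrightarrow> Mk k \<in> carrier_mat d d"
    and Mp: "\<And>k u. k < K \<Longrightarrow> u \<in> carrier_vec d \<Longrightarrow> 0 \<le> u \<bullet> (Mk k *\<^sub>v u)"
    and Ce: "\<And>k k' i j. k < K \<Longrightarrow> k' < K \<Longrightarrow> i < d \<Longrightarrow> j < d \<Longrightarrow>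
         C (k * d + i) (k' * d + j) = (if k = k' then Mk k $$ (i,j) else 0)"
  shows "0 \<le> bilinear_form C (K * d) v v"
proof -
  have inner: "\<And>k i. k < K \<Longrightarrow> i < d \<Longrightarrow> (\<Sum>b<K * d. C (k * d + i) b * v b) = (\<Sum>j<d. Mk k $$ (i,j) * v (k * d + j))"
  proof -
    fix k i assume k: "k < K" and i: "i < d"
    have "(\<Sum>b<K * d. C (k * d + i) b * v b) = (\<Sum>k'<K. \<Sum>j<d. C (k * d + i) (k' * d + j) * v (k' * d + j))"
      by (rule sum_lessThan_mult_blocks)
    also have "\<dots> = (\<Sum>k'<K. if k' = k then (\<Sum>j<d. Mk k $$ (i,j) * v (k * d + j)) else 0)"
      by (intro sum.cong refl) (use k i in \<open>auto simp: Ce\<close>)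
    also have "\<dots> = (\<Sum>j<d. Mk k $$ (i,j) * v (k * d + j))" using k by simp
    finally show "(\<Sum>b<K * d. C (k * d + i) b * v b) = (\<Sum>j<d. Mk k $$ (i,j) * v (k * d + j))" .
  qed
  have "bilinear_form C (K * d) v v = (\<Sum>k<K. \<Sum>i<d. v (k * d + i) * (\<Sum>b<K * d. C (k * d + i) b * v b))"
    unfolding bilinear_form_def by (rule sum_lessThan_mult_blocks)
  also have "\<dots> = (\<Sum>k<K. \<Sum>i<d. v (k * d + i) * (\<Sum>j<d. Mk k $$ (i,j) * v (k * d + j)))"
    by (intro sum.cong refl) (simp add: inner)
  also have "\<dots> = (\<Sum>k<K. vec d (\<lambda>i. v (k * d + i)) \<bullet> (Mk k *\<^sub>v vec d (\<lambda>i. v (k * d + i))))"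
  proof (intro sum.cong refl)
    fix k assume k: "k \<in> {..<K}"
    have Mk: "Mk k \<in> carrier_mat d d" using Mc k by auto
    show "(\<Sum>i<d. v (k * d + i) * (\<Sum>j<d. Mk k $$ (i,j) * v (k * d + j))) =
      vec d (\<lambda>i. v (k * d + i)) \<bullet> (Mk k *\<^sub>v vec d (\<lambda>i. v (k * d + i)))"
      unfolding scalar_prod_def using Mk by (simp add: atLeast0LessThan scalar_prod_def)
  qed
  also have "0 \<le> \<dots>" by (intro sum_nonneg Mp) auto
  finally show ?thesis by simp
qed

lemma calQ_psd:
  assumes "Q \<in> carrier_mat d d" "Qf \<in> carrier_mat d d"
  "\<forall>v \<in> carrier_vec d. 0 \<le> v \<bullet> (Q *\<^sub>v v)" "\<forall>v \<in> carrier_vec d. 0 \<le> v \<bullet> (Qf *\<^sub>v v)"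
  shows "0 \<le> bilinear_form (\<lambda>a b. calQ d N Q Qf $$ (a,b)) (Suc N * d) v v"
proof (rule block_diagonal_psd[where Mk="\<lambda>k. if k < N then Q else Qf"])
  fix k k' i j assume k: "k < Suc N" and k': "k' < Suc N" and i: "i < d" and j: "j < d"
  have a: "k * d + i < Suc N * d" and b: "k' * d + j < Suc N * d"
    using block_index_less k k' i j by blast+
  show "calQ d N Q Qf $$ (k * d + i, k' * d + j) = (if k = k' then (if k < N then Q else Qf) $$ (i,j) else 0)"
    unfolding calQ_def using a b i j by (simp del: mult_Suc)
qed (use assms in auto)

lemma calR_psd:
  assumes "R \<in> carrier_mat m m"
  "\<forall>v \<in> carrier_vec m. v \<noteq> 0\<^sub>v m \<longrightarrow> 0 < v \<bullet> (R *\<^sub>v v)"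
  shows "0 \<le> bilinear_form (\<lambda>a b. calR m N R $$ (a,b)) (N * m) v v"
proof (rule block_diagonal_psd[where Mk="\<lambda>k. R"])
  fix k k' i j assume k: "k < N" and k': "k' < N" and i: "i < m" and j: "j < m"
  have a: "k * m + i < N * m" and b: "k' * m + j < N * m"
    using block_index_less k k' i j by blast+
  show "calR m N R $$ (k * m + i, k' * m + j) = (if k = k' then R $$ (i,j) else 0)"
    unfolding calR_def using a b i j by simp
next
  fix k and u :: "real Matrix.vec" assume u: "u \<in> carrier_vec m"
  show "0 \<le> u \<bullet> (R *\<^sub>v u)"
  proof (cases "u = 0\<^sub>v m")
    case True then show ?thesis using assms(1) by (simp add: scalar_prod_def)
  next
    case False then show ?thesis using assms(2) u by (simp add: less_imp_le)
  qed
qed (use assms in auto)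

lemma calQ_symmetric:
  assumes "Q \<in> carrier_mat d d" "Qf \<in> carrier_mat d d" "Q\<^sup>T = Q" "Qf\<^sup>T = Qf"
  "a < Suc N * d" "b < Suc N * d"
  shows "calQ d N Q Qf $$ (b,a) = calQ d N Q Qf $$ (a,b)"
proof -
  have d: "0 < d" using assms(5) by (cases d) auto
  have sQ: "\<And>i j. i < d \<Longrightarrow> j < d \<Longrightarrow> Q $$ (j,i) = Q $$ (i,j)"
    using assms(1,3) by (metis carrier_matD(1) carrier_matD(2) index_transpose_mat(1))
  have sQf: "\<And>i j. i < d \<Longrightarrow> j < d \<Longrightarrow> Qf $$ (j,i) = Qf $$ (i,j)"
    using assms(2,4) by (metis carrier_matD(1) carrier_matD(2) index_transpose_mat(1))
  show ?thesis unfolding calQ_def using assms(5,6) d sQ sQf by auto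
qed

lemma abs_mult_le_sum_squares: "\<bar>a * b\<bar> \<le> a\<^sup>2 + (b::real)\<^sup>2"
proof -
  have "0 \<le> (\<bar>a\<bar> - \<bar>b\<bar>)\<^sup>2" by simp
  then have "2 * (\<bar>a\<bar> * \<bar>b\<bar>) \<le> \<bar>a\<bar>\<^sup>2 + \<bar>b\<bar>\<^sup>2"
    by (simp add: power2_diff)
  moreover have "0 \<le> \<bar>a\<bar> * \<bar>b\<bar>" by simp
  ultimately show ?thesis unfolding abs_mult power2_abs using zero_le_power2[of a] zero_le_power2[of b]
    by linarith
qed

context prob_space
begin

definition square_integrable :: "('a \<Rightarrow> real) \<Rightarrow> bool" where "square_integrable f \<longleftrightarrow> f \<in> borel_measurable M \<and> integrable M (\<lambda>\<omega>. (f \<omega>)\<^sup>2)"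

lemma square_integrable_mult_integrable:
  fixes f g :: "'a \<Rightarrow> real"
  assumes "square_integrable f" "square_integrable g"
  shows "integrable M (\<lambda>\<omega>. f \<omega> * g \<omega>)"
proof -
  have "integrable M (\<lambda>\<omega>. (f \<omega>)\<^sup>2 + (g \<omega>)\<^sup>2)" using assms unfolding square_integrable_def
    by auto
  then show ?thesis
  proof (rule Bochner_Integration.integrable_bound)
    show "(\<lambda>\<omega>. f \<omega> * g \<omega>) \<in> borel_measurable M" using assms unfolding square_integrable_def
      by auto
    show "AE x in M. norm (f x * g x) \<le> norm ((f x)\<^sup>2 + (g x)\<^sup>2)"
    proof (rule AE_I2)
      fix x
      have "\<bar>f x * g x\<bar> \<le> (f x)\<^sup>2 + (g x)\<^sup>2"
        by (rule abs_mult_le_sum_squares)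
      then show "norm (f x * g x) \<le> norm ((f x)\<^sup>2 + (g x)\<^sup>2)" by simp
    qed
  qed
qed

lemma square_integrable_integrable: "square_integrable f \<Longrightarrow> integrable M f"
  unfolding square_integrable_def by (auto intro: square_integrable_imp_integrable)

lemma square_integrable_add:
  assumes "square_integrable f" "square_integrable g"
  shows "square_integrable (\<lambda>\<omega>. f \<omega> + g \<omega>)"
proof -
  have m: "(\<lambda>\<omega>. f \<omega> + g \<omega>) \<in> borel_measurable M" using assms unfolding square_integrable_def
    by auto
  have "integrable M (\<lambda>\<omega>. 2 * (f \<omega>)\<^sup>2 + 2 * (g \<omega>)\<^sup>2)" using assms unfolding square_integrable_def
    by auto
  then have "integrable M (\<lambda>\<omega>. (f \<omega> + g \<omega>)\<^sup>2)"
  proof (rule Bochner_Integration.integrable_bound)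
    show "(\<lambda>\<omega>. (f \<omega> + g \<omega>)\<^sup>2) \<in> borel_measurable M" using m
      by measurable
    show "AE x in M. norm ((f x + g x)\<^sup>2) \<le> norm (2 * (f x)\<^sup>2 + 2 * (g x)\<^sup>2)"
    proof (rule AE_I2)
      fix x
      have "0 \<le> (f x - g x)\<^sup>2" by simp
      then have "(f x + g x)\<^sup>2 \<le> 2 * (f x)\<^sup>2 + 2 * (g x)\<^sup>2"
        by (simp add: power2_sum power2_diff)
      then show "norm ((f x + g x)\<^sup>2) \<le> norm (2 * (f x)\<^sup>2 + 2 * (g x)\<^sup>2)" by simp
    qed
  qed
  with m show ?thesis unfolding square_integrable_def by auto
qed

lemma square_integrable_cmult:
  assumes "square_integrable f"
  shows "square_integrable (\<lambda>\<omega>. c * f \<omega>)"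
  using assms unfolding square_integrable_def by (auto simp: power_mult_distrib)

lemma square_integrable_const: "square_integrable (\<lambda>\<omega>. c)"
  unfolding square_integrable_def by auto

lemma square_integrable_sum: "finite I \<Longrightarrow> (\<And>i. i \<in> I \<Longrightarrow> square_integrable (f i)) \<Longrightarrow> square_integrable (\<lambda>\<omega>. \<Sum>i\<in>I. f i \<omega>)"
proof (induction I rule: finite_induct)
  case empty then show ?case using square_integrable_const[of 0] by simp
next
  case (insert x F)
  then show ?case by (simp add: square_integrable_add)
qed

lemma square_integrable_bounded:
  assumes "f \<in> borel_measurable M" "\<And>\<omega>. \<omega> \<in> space M \<Longrightarrow> \<bar>f \<omega>\<bar> \<le> C"
  shows "square_integrable f"
  unfolding square_integrable_def
proof
  show "f \<in> borel_measurable M" by fact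
  show "integrable M (\<lambda>\<omega>. (f \<omega>)\<^sup>2)"
  proof (rule integrable_const_bound[where B="C\<^sup>2"])
    show "AE x in M. norm ((f x)\<^sup>2) \<le> C\<^sup>2"
    proof (rule AE_I2)
      fix x assume "x \<in> space M"
      then have "\<bar>f x\<bar> \<le> C" by (rule assms(2))
      then have "\<bar>f x\<bar>\<^sup>2 \<le> C\<^sup>2" by (rule power_mono) simp
      then show "norm ((f x)\<^sup>2) \<le> C\<^sup>2" by simp
    qed
    show "(\<lambda>x. (f x)\<^sup>2) \<in> borel_measurable M" using assms(1) by measurable
  qed
qed

lemma square_integrable_mult_bounded:
  assumes "square_integrable f" "square_integrable g" "\<And>\<omega>. \<omega> \<in> space M \<Longrightarrow> \<bar>f \<omega>\<bar> \<le> C"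
  shows "square_integrable (\<lambda>\<omega>. f \<omega> * g \<omega>)"
  unfolding square_integrable_def
proof
  show m: "(\<lambda>\<omega>. f \<omega> * g \<omega>) \<in> borel_measurable M" using assms unfolding square_integrable_def
    by auto
  have "integrable M (\<lambda>\<omega>. C\<^sup>2 * (g \<omega>)\<^sup>2)" using assms unfolding square_integrable_def
    by auto
  then show "integrable M (\<lambda>\<omega>. (f \<omega> * g \<omega>)\<^sup>2)"
  proof (rule Bochner_Integration.integrable_bound)
    show "(\<lambda>\<omega>. (f \<omega> * g \<omega>)\<^sup>2) \<in> borel_measurable M" using m
      by measurable
    show "AE x in M. norm ((f x * g x)\<^sup>2) \<le> norm (C\<^sup>2 * (g x)\<^sup>2)"
    proof (rule AE_I2)
      fix x assume "x \<in> space M"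
      then have "\<bar>f x\<bar> \<le> C" by (rule assms(3))
      then have "\<bar>f x\<bar>\<^sup>2 \<le> C\<^sup>2" by (rule power_mono) simp
      then have "(f x)\<^sup>2 * (g x)\<^sup>2 \<le> C\<^sup>2 * (g x)\<^sup>2" by (simp add: mult_right_mono)
      then show "norm ((f x * g x)\<^sup>2) \<le> norm (C\<^sup>2 * (g x)\<^sup>2)"
        by (simp add: power_mult_distrib)
    qed
  qed
qed

lemma integral_double_sum:
  fixes f :: "'i \<Rightarrow> 'j \<Rightarrow> 'a \<Rightarrow> real"
  assumes "finite I" "finite J" "\<And>i j. i \<in> I \<Longrightarrow> j \<in> J \<Longrightarrow> integrable M (f i j)"
  shows "integrable M (\<lambda>\<omega>. \<Sum>i\<in>I. \<Sum>j\<in>J. c i j * f i j \<omega>)"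
    "(\<integral>\<omega>. (\<Sum>i\<in>I. \<Sum>j\<in>J. c i j * f i j \<omega>) \<partial>M) = (\<Sum>i\<in>I. \<Sum>j\<in>J. c i j * (\<integral>\<omega>. f i j \<omega> \<partial>M))"
proof -
  show "integrable M (\<lambda>\<omega>. \<Sum>i\<in>I. \<Sum>j\<in>J. c i j * f i j \<omega>)"
    using assms(3) by (intro Bochner_Integration.integrable_sum integrable_mult_right) auto
  have "(\<integral>\<omega>. (\<Sum>i\<in>I. \<Sum>j\<in>J. c i j * f i j \<omega>) \<partial>M) = (\<Sum>i\<in>I. \<integral>\<omega>. (\<Sum>j\<in>J. c i j * f i j \<omega>) \<partial>M)"
    by (rule Bochner_Integration.integral_sum[where f="\<lambda>i \<omega>. \<Sum>j\<in>J. c i j * f i j \<omega>"])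
       (use assms(3) in \<open>intro Bochner_Integration.integrable_sum integrable_mult_right, auto\<close>)
  also have "\<dots> = (\<Sum>i\<in>I. \<Sum>j\<in>J. c i j * (\<integral>\<omega>. f i j \<omega> \<partial>M))"
  proof (rule sum.cong[OF refl])
    fix i assume i: "i \<in> I"
    show "(\<integral>\<omega>. (\<Sum>j\<in>J. c i j * f i j \<omega>) \<partial>M) = (\<Sum>j\<in>J. c i j * (\<integral>\<omega>. f i j \<omega> \<partial>M))"
      by (subst Bochner_Integration.integral_sum[where f="\<lambda>j \<omega>. c i j * f i j \<omega>"])
         (use i assms(3) in auto)
  qed
  finally show "(\<integral>\<omega>. (\<Sum>i\<in>I. \<Sum>j\<in>J. c i j * f i j \<omega>) \<partial>M) = (\<Sum>i\<in>I. \<Sum>j\<in>J. c i j * (\<integral>\<omega>. f i j \<omega> \<partial>M))" .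
qed

end

locale tp1_setting = prob_space M for M :: "'w measure" +
  fixes d m N \<kappa> t :: nat and w :: "nat \<Rightarrow> 'w \<Rightarrow> nat \<Rightarrow> real"
    and \<nu> :: "nat \<Rightarrow> 'w \<Rightarrow> real" and \<phi> :: "nat \<Rightarrow> (nat \<Rightarrow> real) \<Rightarrow> nat \<Rightarrow> real"
    and \<phi>max :: real
  assumes nu_vals: "\<forall>s. \<forall>\<omega> \<in> space M. \<nu> s \<omega> \<in> {0, 1}"
    and indep: "indep_vars
                  (\<lambda>k. case k of Inl s \<Rightarrow> PiM {..<d} (\<lambda>_. borel) | Inr s \<Rightarrow> PiM {0} (\<lambda>_. borel))
                  (\<lambda>k \<omega>. case k of Inl s \<Rightarrow> restrict (w s \<omega>) {..<d}
                                 | Inr s \<Rightarrow> restrict (\<lambda>_. \<nu> s \<omega>) {0::nat})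
                  (UNIV :: (nat + nat) set)"
    and phi_meas: "\<forall>i \<in> {1..N - 1}. (\<lambda>v. restrict (\<phi> i (restrict v {..<d})) {..<d})
                     \<in> PiM {..<d} (\<lambda>_. borel) \<rightarrow>\<^sub>M PiM {..<d} (\<lambda>_. borel)"
    and phi_bound: "\<forall>i \<in> {1..N - 1}. \<forall>v. \<forall>j < d. \<bar>\<phi> i v j\<bar> \<le> \<phi>max"
    and phi_mean: "\<forall>i \<in> {1..N - 1}. \<forall>s. \<forall>j < d.
                     (\<integral>\<omega>. \<phi> i (restrict (w s \<omega>) {..<d}) j \<partial>M) = 0"
    and w_mean: "\<forall>s. \<forall>j < d. integrable M (\<lambda>\<omega>. w s \<omega> j) \<and> (\<integral>\<omega>. w s \<omega> j \<partial>M) = 0"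
    and w_4th: "\<forall>s. \<forall>j < d. integrable M (\<lambda>\<omega>. (w s \<omega> j) ^ 4)"
begin

text \<open>The independent family of hypothesis \<open>indep\<close> (noise \<open>w\<^sub>s\<close> at \<open>Inl s\<close>, dropout \<open>\<nu>\<^sub>s\<close> at
  \<open>Inr s\<close>), split into its dropout half and its noise half, each a single random element.\<close>

abbreviation "joint_space \<equiv> (\<lambda>k::nat+nat. case k of Inl s \<Rightarrow> PiM {..<d} (\<lambda>_. borel :: real measure) | Inr s \<Rightarrow> PiM {0::nat} (\<lambda>_. borel :: real measure))"

abbreviation "joint_process \<equiv> (\<lambda>(k::nat+nat) \<omega>. case k of Inl s \<Rightarrow> restrict (w s \<omega>) {..<d}
                                 | Inr s \<Rightarrow> restrict (\<lambda>_. \<nu> s \<omega>) {0::nat})"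

abbreviation "dropout_space \<equiv> PiM (range (Inr :: nat \<Rightarrow> nat + nat)) joint_space"

abbreviation "noise_space \<equiv> PiM (range (Inl :: nat \<Rightarrow> nat + nat)) joint_space"

definition "dropout_family \<omega> = restrict (\<lambda>k. joint_process k \<omega>) (range (Inr :: nat \<Rightarrow> nat + nat))"

definition "noise_family \<omega> = restrict (\<lambda>k. joint_process k \<omega>) (range (Inl :: nat \<Rightarrow> nat + nat))"

lemma indep_dropout_noise_families: "indep_var (dropout_space) dropout_family (noise_space) noise_family"
  unfolding dropout_family_def noise_family_def
  by (rule indep_var_restrict[OF indep]) auto

lemma integral_mult_indep_families:
  fixes F G :: "'w \<Rightarrow> real"
  assumes f: "f \<in> borel_measurable (dropout_space)"
    and g: "g \<in> borel_measurable (noise_space)"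
    and F: "\<And>\<omega>. F \<omega> = f (dropout_family \<omega>)" and G: "\<And>\<omega>. G \<omega> = g (noise_family \<omega>)"
    and iF: "integrable M F" and iG: "integrable M G"
  shows "(\<integral>\<omega>. F \<omega> * G \<omega> \<partial>M) = (\<integral>\<omega>. F \<omega> \<partial>M) * (\<integral>\<omega>. G \<omega> \<partial>M)"
    "integrable M (\<lambda>\<omega>. F \<omega> * G \<omega>)"
proof -
  have "indep_var borel (f \<circ> dropout_family) borel (g \<circ> noise_family)"
    by (rule indep_var_compose[OF indep_dropout_noise_families f g])
  moreover have "F = f \<circ> dropout_family" "G = g \<circ> noise_family" using F G by auto
  ultimately have i: "indep_var borel F borel G" by simp
  show "(\<integral>\<omega>. F \<omega> * G \<omega> \<partial>M) = (\<integral>\<omega>. F \<omega> \<partial>M) * (\<integral>\<omega>. G \<omega> \<partial>M)"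
    using indep_var_lebesgue_integral[OF i iF iG] .
  show "integrable M (\<lambda>\<omega>. F \<omega> * G \<omega>)"
    using indep_var_integrable[OF i iF iG] .
qed

lemma measurable_dropout_coord: "(\<lambda>y. y (Inr s) (0::nat)) \<in> borel_measurable (dropout_space)"
proof -
  have "(\<lambda>y. y (Inr s)) \<in> dropout_space \<rightarrow>\<^sub>M joint_space (Inr s)"
    by (rule measurable_component_singleton[of "Inr s" "range (Inr :: nat \<Rightarrow> nat + nat)" joint_space]) auto
  then have "(\<lambda>y. y (Inr s)) \<in> dropout_space \<rightarrow>\<^sub>M PiM {0::nat} (\<lambda>_. borel)"
    by simp
  moreover have "(\<lambda>z. z (0::nat)) \<in> PiM {0::nat} (\<lambda>_. borel) \<rightarrow>\<^sub>M (borel :: real measure)"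
    by (rule measurable_component_singleton) auto
  ultimately show ?thesis by (rule measurable_compose)
qed

lemma measurable_noise_component: "(\<lambda>y. y (Inl s)) \<in> noise_space \<rightarrow>\<^sub>M PiM {..<d} (\<lambda>_. borel)"
proof -
  have "(\<lambda>y. y (Inl s)) \<in> noise_space \<rightarrow>\<^sub>M joint_space (Inl s)"
    by (rule measurable_component_singleton[of "Inl s" "range (Inl :: nat \<Rightarrow> nat + nat)" joint_space]) auto
  then show ?thesis by simp
qed

lemma measurable_noise_coord: "j < d \<Longrightarrow> (\<lambda>y. y (Inl s) j) \<in> borel_measurable (noise_space)"
  by (rule measurable_compose[OF measurable_noise_component]) (rule measurable_component_singleton, auto)

lemma phi_stack_index:
  assumes "k < (N - 1) * d" shows "Suc (k div d) \<in> {1..N - 1}" "k mod d < d"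
proof -
  have d: "0 < d" using assms by (cases d) auto
  then show "k mod d < d" by simp
  have "k div d < N - 1" using assms d by (simp add: div_less_iff_less_mult)
  then show "Suc (k div d) \<in> {1..N - 1}" by simp
qed

lemma measurable_phi_coord:
  assumes "i \<in> {1..N-1}" "j < d"
  shows "(\<lambda>y. \<phi> i (restrict (y (Inl s)) {..<d}) j) \<in> borel_measurable (noise_space)"
proof -
  have "(\<lambda>v. restrict (\<phi> i (restrict v {..<d})) {..<d} j) \<in> borel_measurable (PiM {..<d} (\<lambda>_. borel))"
    by (rule measurable_compose[OF phi_meas[rule_format, OF assms(1)]])
       (rule measurable_component_singleton, use assms in auto)
  then have "(\<lambda>v. \<phi> i (restrict v {..<d}) j) \<in> borel_measurable (PiM {..<d} (\<lambda>_. borel))"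
    using assms(2) by simp
  from measurable_compose[OF measurable_noise_component this] show ?thesis by simp
qed

lemma dropout_family_measurable: "dropout_family \<in> M \<rightarrow>\<^sub>M dropout_space"
  and noise_family_measurable: "noise_family \<in> M \<rightarrow>\<^sub>M noise_space"
  using indep_dropout_noise_families unfolding indep_var_eq by auto

text \<open>The \<open>_fun\<close>
  variants read the same entries off the dropout resp. noise half; this is how independence of \<open>S\<close>
  from \<open>(w, \<phi>(w))\<close> is transported to them.\<close>

definition "s_diag i \<omega> = (if i div m < \<kappa> then \<nu> (t + i div m) \<omega> else 1)"

definition "phi_entry k \<omega> = \<phi> (Suc (k div d)) (restrict (w (t + k div d) \<omega>) {..<d}) (k mod d)"

definition "w_entry j \<omega> = w (t + j div d) \<omega> (j mod d)"

definition "s_diag_fun i y = (if i div m < \<kappa> then y (Inr (t + i div m)) (0::nat) else (1::real))"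

definition "phi_entry_fun k y = \<phi> (Suc (k div d)) (restrict (y (Inl (t + k div d))) {..<d}) (k mod d)"

definition "w_entry_fun j y = y (Inl (t + j div d)) (j mod d)"

lemma s_diag_fun_measurable: "s_diag_fun i \<in> borel_measurable (dropout_space)"
  unfolding s_diag_fun_def using measurable_dropout_coord by auto

lemma s_diag_fun_dropout_family: "s_diag_fun i (dropout_family \<omega>) = s_diag i \<omega>"
  unfolding s_diag_fun_def s_diag_def dropout_family_def by auto

lemma phi_entry_fun_measurable: "k < (N - 1) * d \<Longrightarrow> phi_entry_fun k \<in> borel_measurable (noise_space)"
  unfolding phi_entry_fun_def using phi_stack_index by (blast intro: measurable_phi_coord)

lemma phi_entry_fun_noise_family: "phi_entry_fun k (noise_family \<omega>) = phi_entry k \<omega>"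
  unfolding phi_entry_fun_def phi_entry_def noise_family_def by auto

lemma w_entry_fun_measurable: "j < N * d \<Longrightarrow> w_entry_fun j \<in> borel_measurable (noise_space)"
  unfolding w_entry_fun_def by (rule measurable_noise_coord) (cases d, auto)

lemma w_entry_fun_noise_family: "j < N * d \<Longrightarrow> w_entry_fun j (noise_family \<omega>) = w_entry j \<omega>"
  unfolding w_entry_fun_def w_entry_def noise_family_def by (cases d) auto

lemma s_diag_measurable[measurable]: "s_diag i \<in> borel_measurable M"
proof -
  have "s_diag_fun i \<circ> dropout_family \<in> borel_measurable M"
    using measurable_comp[OF dropout_family_measurable s_diag_fun_measurable] .
  then show ?thesis by (simp add: comp_def s_diag_fun_dropout_family)
qed

lemma phi_entry_measurable[measurable]: "k < (N - 1) * d \<Longrightarrow> phi_entry k \<in> borel_measurable M"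
proof -
  assume k: "k < (N - 1) * d"
  have "phi_entry_fun k \<circ> noise_family \<in> borel_measurable M"
    using measurable_comp[OF noise_family_measurable phi_entry_fun_measurable[OF k]] .
  then show ?thesis by (simp add: comp_def phi_entry_fun_noise_family)
qed

lemma w_entry_measurable[measurable]: "j < N * d \<Longrightarrow> w_entry j \<in> borel_measurable M"
proof -
  assume k: "j < N * d"
  have "w_entry_fun j \<circ> noise_family \<in> borel_measurable M"
    using measurable_comp[OF noise_family_measurable w_entry_fun_measurable[OF k]] .
  then show ?thesis using k by (simp add: comp_def w_entry_fun_noise_family cong: measurable_cong)
qed

lemma abs_s_diag_le_1: "\<omega> \<in> space M \<Longrightarrow> \<bar>s_diag i \<omega>\<bar> \<le> 1"
  using nu_vals unfolding s_diag_def
    by (auto split: if_splits) (metis abs_0 abs_one insert_iff order_refl singletonD zero_le_one)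

lemma abs_phi_entry_le: "k < (N - 1) * d \<Longrightarrow> \<bar>phi_entry k \<omega>\<bar> \<le> \<phi>max"
  unfolding phi_entry_def using phi_bound phi_stack_index by blast

lemma integral_phi_entry: "k < (N - 1) * d \<Longrightarrow> (\<integral>\<omega>. phi_entry k \<omega> \<partial>M) = 0"
  unfolding phi_entry_def using phi_mean phi_stack_index by blast

lemma integrable_w_entry: "j < N * d \<Longrightarrow> integrable M (w_entry j)"
  and integral_w_entry: "j < N * d \<Longrightarrow> (\<integral>\<omega>. w_entry j \<omega> \<partial>M) = 0"
proof -
  assume j: "j < N * d"
  then have d: "0 < d" by (cases d) auto
  show "integrable M (w_entry j)" unfolding w_entry_def using w_mean[rule_format, of "j mod d"] d by simp
  show "(\<integral>\<omega>. w_entry j \<omega> \<partial>M) = 0" unfolding w_entry_def using w_mean[rule_format, of "j mod d"] d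
    by simp
qed

lemma integrable_w_entry_square: "j < N * d \<Longrightarrow> integrable M (\<lambda>\<omega>. (w_entry j \<omega>)\<^sup>2)"
proof -
  assume j: "j < N * d"
  then have d: "0 < d" by (cases d) auto
  have i4: "integrable M (\<lambda>\<omega>. (w_entry j \<omega>) ^ 4)" unfolding w_entry_def using w_4th[rule_format, of "j mod d"] d
    by simp
  have "integrable M (\<lambda>\<omega>. 1 + (w_entry j \<omega>) ^ 4)" using i4 by auto
  then show ?thesis
  proof (rule Bochner_Integration.integrable_bound)
    show "(\<lambda>\<omega>. (w_entry j \<omega>)\<^sup>2) \<in> borel_measurable M" using j by measurable
    show "AE x in M. norm ((w_entry j x)\<^sup>2) \<le> norm (1 + w_entry j x ^ 4)"
    proof (rule AE_I2)
      fix x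
      have "(w_entry j x)\<^sup>2 \<le> 1 + (w_entry j x)^4"
      proof (cases "\<bar>w_entry j x\<bar> \<le> 1")
        case True
        then have "(w_entry j x)\<^sup>2 \<le> 1" using abs_square_le_1 by blast
        moreover have "0 \<le> w_entry j x ^ 4" by (simp add: zero_le_even_power)
        ultimately show ?thesis by linarith
      next
        case False
        then have h1: "1 \<le> (w_entry j x)\<^sup>2" using abs_square_le_1[of "w_entry j x"] abs_square_less_1[of "w_entry j x"]
          by linarith
        have "(w_entry j x)\<^sup>2 * 1 \<le> (w_entry j x)\<^sup>2 * (w_entry j x)\<^sup>2"
          by (rule mult_left_mono[OF h1]) simp
        then show ?thesis by (simp add: power2_eq_square power4_eq_xxxx mult.assoc)
      qed
      then show "norm ((w_entry j x)\<^sup>2) \<le> norm (1 + w_entry j x ^ 4)" by auto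
    qed
  qed
qed

lemma square_integrable_s_diag: "square_integrable (s_diag i)" by (rule square_integrable_bounded[OF s_diag_measurable abs_s_diag_le_1])

lemma square_integrable_phi_entry: "k < (N - 1) * d \<Longrightarrow> square_integrable (phi_entry k)" by (rule square_integrable_bounded[OF phi_entry_measurable abs_phi_entry_le])

lemma square_integrable_w_entry: "j < N * d \<Longrightarrow> square_integrable (w_entry j)" unfolding square_integrable_def using w_entry_measurable integrable_w_entry_square by auto

definition "u_entry \<eta> \<Theta> i \<omega> = \<eta> $ i + (\<Sum>k<(N - 1) * d. \<Theta> $$ (i,k) * phi_entry k \<omega>)"

definition "u_entry_fun \<eta> \<Theta> i y = \<eta> $ i + (\<Sum>k<(N - 1) * d. \<Theta> $$ (i,k) * phi_entry_fun k y)"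

lemma u_entry_fun_measurable: "u_entry_fun \<eta> \<Theta> i \<in> borel_measurable (noise_space)"
  unfolding u_entry_fun_def using phi_entry_fun_measurable
    by (intro borel_measurable_add borel_measurable_const borel_measurable_sum
      borel_measurable_times) auto

lemma u_entry_fun_noise_family: "u_entry_fun \<eta> \<Theta> i (noise_family \<omega>) = u_entry \<eta> \<Theta> i \<omega>"
  unfolding u_entry_fun_def u_entry_def by (simp add: phi_entry_fun_noise_family)

lemma u_entry_measurable: "u_entry \<eta> \<Theta> i \<in> borel_measurable M"
  unfolding u_entry_def by measurable

lemma abs_u_entry_le: "\<bar>u_entry \<eta> \<Theta> i \<omega>\<bar> \<le> \<bar>\<eta> $ i\<bar> + (\<Sum>k<(N - 1) * d. \<bar>\<Theta> $$ (i,k)\<bar> * \<phi>max)"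
proof -
  have "\<bar>u_entry \<eta> \<Theta> i \<omega>\<bar> \<le> \<bar>\<eta> $ i\<bar> + \<bar>\<Sum>k<(N - 1) * d. \<Theta> $$ (i,k) * phi_entry k \<omega>\<bar>"
    unfolding u_entry_def by (rule abs_triangle_ineq)
  also have "\<bar>\<Sum>k<(N - 1) * d. \<Theta> $$ (i,k) * phi_entry k \<omega>\<bar> \<le> (\<Sum>k<(N - 1) * d. \<bar>\<Theta> $$ (i,k) * phi_entry k \<omega>\<bar>)"
    by (rule sum_abs)
  also have "\<dots> \<le> (\<Sum>k<(N - 1) * d. \<bar>\<Theta> $$ (i,k)\<bar> * \<phi>max)"
    by (rule sum_mono) (simp add: abs_mult mult_left_mono abs_phi_entry_le)
  finally show ?thesis by simp
qed

lemma square_integrable_u_entry: "square_integrable (u_entry \<eta> \<Theta> i)" by (rule square_integrable_bounded[OF u_entry_measurable abs_u_entry_le])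

lemma integrable_u_entry: "integrable M (u_entry \<eta> \<Theta> i)"
  using square_integrable_integrable[OF square_integrable_u_entry] by simp

lemma integrable_phi_entry: "k < (N - 1) * d \<Longrightarrow> integrable M (phi_entry k)"
  using square_integrable_integrable[OF square_integrable_phi_entry] by simp

lemma integral_u_entry: "(\<integral>\<omega>. u_entry \<eta> \<Theta> i \<omega> \<partial>M) = \<eta> $ i"
proof -
  have "integrable M (\<lambda>\<omega>. \<Sum>k<(N - 1) * d. \<Theta> $$ (i,k) * phi_entry k \<omega>)"
    by (intro Bochner_Integration.integrable_sum integrable_mult_right) (simp add: integrable_phi_entry)
  moreover have "(\<integral>\<omega>. (\<Sum>k<(N - 1) * d. \<Theta> $$ (i,k) * phi_entry k \<omega>) \<partial>M) = 0"
    by (subst Bochner_Integration.integral_sum) (simp_all add: integrable_phi_entry integral_phi_entry)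
  ultimately show ?thesis unfolding u_entry_def by (simp add: prob_space)
qed

lemma integral_s_diag_u_entry: "(\<integral>\<omega>. s_diag i \<omega> * u_entry \<eta> \<Theta> i \<omega> \<partial>M) = (\<integral>\<omega>. s_diag i \<omega> \<partial>M) * \<eta> $ i"
proof -
  have "(\<integral>\<omega>. s_diag i \<omega> * u_entry \<eta> \<Theta> i \<omega> \<partial>M) = (\<integral>\<omega>. s_diag i \<omega> \<partial>M) * (\<integral>\<omega>. u_entry \<eta> \<Theta> i \<omega> \<partial>M)"
    by (rule integral_mult_indep_families(1)[OF s_diag_fun_measurable u_entry_fun_measurable s_diag_fun_dropout_family[symmetric] u_entry_fun_noise_family[symmetric]])
       (use square_integrable_integrable[OF square_integrable_s_diag] integrable_u_entry in auto)
  then show ?thesis by (simp add: integral_u_entry)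
qed

lemma integral_s_diag_u_entry_products: "(\<integral>\<omega>. (s_diag i \<omega> * u_entry \<eta> \<Theta> i \<omega>) * (s_diag j \<omega> * u_entry \<eta> \<Theta> j \<omega>) \<partial>M)
   = (\<integral>\<omega>. s_diag i \<omega> * s_diag j \<omega> \<partial>M) * (\<integral>\<omega>. u_entry \<eta> \<Theta> i \<omega> * u_entry \<eta> \<Theta> j \<omega> \<partial>M)"
proof -
  have e: "\<And>\<omega>. (s_diag i \<omega> * u_entry \<eta> \<Theta> i \<omega>) * (s_diag j \<omega> * u_entry \<eta> \<Theta> j \<omega>)
     = (s_diag i \<omega> * s_diag j \<omega>) * (u_entry \<eta> \<Theta> i \<omega> * u_entry \<eta> \<Theta> j \<omega>)" by (simp add: mult_ac)
  have "(\<integral>\<omega>. (s_diag i \<omega> * s_diag j \<omega>) * (u_entry \<eta> \<Theta> i \<omega> * u_entry \<eta> \<Theta> j \<omega>) \<partial>M)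
   = (\<integral>\<omega>. s_diag i \<omega> * s_diag j \<omega> \<partial>M) * (\<integral>\<omega>. u_entry \<eta> \<Theta> i \<omega> * u_entry \<eta> \<Theta> j \<omega> \<partial>M)"
    by (rule integral_mult_indep_families(1)[where f="\<lambda>y. s_diag_fun i y * s_diag_fun j y" and g="\<lambda>y. u_entry_fun \<eta> \<Theta> i y * u_entry_fun \<eta> \<Theta> j y"])
       (use s_diag_fun_measurable u_entry_fun_measurable s_diag_fun_dropout_family u_entry_fun_noise_family square_integrable_mult_integrable[OF square_integrable_s_diag square_integrable_s_diag] square_integrable_mult_integrable[OF square_integrable_u_entry square_integrable_u_entry] in auto)
  then show ?thesis by (simp add: e)
qed

lemma integral_s_diag_u_entry_w_entry: "j < N * d \<Longrightarrow> (\<integral>\<omega>. (s_diag i \<omega> * u_entry \<eta> \<Theta> i \<omega>) * w_entry j \<omega> \<partial>M)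
   = (\<integral>\<omega>. s_diag i \<omega> \<partial>M) * (\<integral>\<omega>. u_entry \<eta> \<Theta> i \<omega> * w_entry j \<omega> \<partial>M)"
proof -
  assume j: "j < N * d"
  have e: "\<And>\<omega>. (s_diag i \<omega> * u_entry \<eta> \<Theta> i \<omega>) * w_entry j \<omega> = s_diag i \<omega> * (u_entry \<eta> \<Theta> i \<omega> * w_entry j \<omega>)"
    by (simp add: mult_ac)
  have "(\<integral>\<omega>. s_diag i \<omega> * (u_entry \<eta> \<Theta> i \<omega> * w_entry j \<omega>) \<partial>M)
   = (\<integral>\<omega>. s_diag i \<omega> \<partial>M) * (\<integral>\<omega>. u_entry \<eta> \<Theta> i \<omega> * w_entry j \<omega> \<partial>M)"
    by (rule integral_mult_indep_families(1)[where f="s_diag_fun i" and g="\<lambda>y. u_entry_fun \<eta> \<Theta> i y * w_entry_fun j y"])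
       (use s_diag_fun_measurable u_entry_fun_measurable w_entry_fun_measurable[OF j] s_diag_fun_dropout_family u_entry_fun_noise_family w_entry_fun_noise_family[OF j] square_integrable_integrable[OF square_integrable_s_diag]
          square_integrable_mult_integrable[OF square_integrable_u_entry square_integrable_w_entry[OF j]] in auto)
  then show ?thesis by (simp add: e)
qed

lemma integral_u_entry_products: "(\<integral>\<omega>. u_entry \<eta> \<Theta> i \<omega> * u_entry \<eta> \<Theta> j \<omega> \<partial>M) = \<eta> $ i * \<eta> $ j
   + (\<Sum>k<(N - 1) * d. \<Sum>l<(N - 1) * d. \<Theta> $$ (i,k) * \<Theta> $$ (j,l) * (\<integral>\<omega>. phi_entry k \<omega> * phi_entry l \<omega> \<partial>M))"
proof -
  let ?q = "(N - 1) * d"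
  have e: "\<And>\<omega>. u_entry \<eta> \<Theta> i \<omega> * u_entry \<eta> \<Theta> j \<omega> = \<eta> $ i * \<eta> $ j
     + (\<Sum>l<?q. \<eta> $ i * \<Theta> $$ (j,l) * phi_entry l \<omega>) + (\<Sum>k<?q. \<eta> $ j * \<Theta> $$ (i,k) * phi_entry k \<omega>)
     + (\<Sum>k<?q. \<Sum>l<?q. \<Theta> $$ (i,k) * \<Theta> $$ (j,l) * (phi_entry k \<omega> * phi_entry l \<omega>))"
  proof -
    fix \<omega>
    let ?A = "\<Sum>k<?q. \<Theta> $$ (i,k) * phi_entry k \<omega>" and ?B = "\<Sum>l<?q. \<Theta> $$ (j,l) * phi_entry l \<omega>"
    have "u_entry \<eta> \<Theta> i \<omega> * u_entry \<eta> \<Theta> j \<omega> = \<eta> $ i * \<eta> $ j + \<eta> $ i * ?B + \<eta> $ j * ?A + ?A * ?B"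
      unfolding u_entry_def by (simp add: algebra_simps)
    also have "?A * ?B = (\<Sum>k<?q. \<Sum>l<?q. \<Theta> $$ (i,k) * \<Theta> $$ (j,l) * (phi_entry k \<omega> * phi_entry l \<omega>))"
      unfolding sum_product by (simp add: mult_ac)
    also have "\<eta> $ i * ?B = (\<Sum>l<?q. \<eta> $ i * \<Theta> $$ (j,l) * phi_entry l \<omega>)"
      by (simp add: sum_distrib_left mult_ac)
    also have "\<eta> $ j * ?A = (\<Sum>k<?q. \<eta> $ j * \<Theta> $$ (i,k) * phi_entry k \<omega>)"
      by (simp add: sum_distrib_left mult_ac)
    finally show "?thesis \<omega>" .
  qed
  have i1: "integrable M (\<lambda>\<omega>. \<Sum>l<?q. \<eta> $ i * \<Theta> $$ (j,l) * phi_entry l \<omega>)"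
    by (rule Bochner_Integration.integrable_sum) (simp add: integrable_phi_entry)
  have i2: "integrable M (\<lambda>\<omega>. \<Sum>k<?q. \<eta> $ j * \<Theta> $$ (i,k) * phi_entry k \<omega>)"
    by (rule Bochner_Integration.integrable_sum) (simp add: integrable_phi_entry)
  have ipp: "\<And>k l. k < ?q \<Longrightarrow> l < ?q \<Longrightarrow> integrable M (\<lambda>\<omega>. phi_entry k \<omega> * phi_entry l \<omega>)"
    using square_integrable_mult_integrable[OF square_integrable_phi_entry square_integrable_phi_entry]
      by blast
  have i3: "integrable M (\<lambda>\<omega>. \<Sum>k<?q. \<Sum>l<?q. \<Theta> $$ (i,k) * \<Theta> $$ (j,l) * (phi_entry k \<omega> * phi_entry l \<omega>))"
    and z3: "(\<integral>\<omega>. (\<Sum>k<?q. \<Sum>l<?q. \<Theta> $$ (i,k) * \<Theta> $$ (j,l) * (phi_entry k \<omega> * phi_entry l \<omega>)) \<partial>M)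
     = (\<Sum>k<?q. \<Sum>l<?q. \<Theta> $$ (i,k) * \<Theta> $$ (j,l) * (\<integral>\<omega>. phi_entry k \<omega> * phi_entry l \<omega> \<partial>M))"
    using integral_double_sum[where c="\<lambda>k l. \<Theta> $$ (i,k) * \<Theta> $$ (j,l)"
        and f="\<lambda>k l \<omega>. phi_entry k \<omega> * phi_entry l \<omega>", of "{..<?q}" "{..<?q}"] ipp
          by auto
  have z1: "(\<integral>\<omega>. (\<Sum>l<?q. \<eta> $ i * \<Theta> $$ (j,l) * phi_entry l \<omega>) \<partial>M) = 0"
    by (subst Bochner_Integration.integral_sum) (simp_all add: integrable_phi_entry integral_phi_entry)
  have z2: "(\<integral>\<omega>. (\<Sum>k<?q. \<eta> $ j * \<Theta> $$ (i,k) * phi_entry k \<omega>) \<partial>M) = 0"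
    by (subst Bochner_Integration.integral_sum) (simp_all add: integrable_phi_entry integral_phi_entry)
  show ?thesis unfolding e using i1 i2 i3 z1 z2 z3 by (simp add: prob_space)
qed

lemma integral_u_entry_w_entry: "j < N * d \<Longrightarrow> (\<integral>\<omega>. u_entry \<eta> \<Theta> i \<omega> * w_entry j \<omega> \<partial>M) =
    (\<Sum>k<(N - 1) * d. \<Theta> $$ (i,k) * (\<integral>\<omega>. w_entry j \<omega> * phi_entry k \<omega> \<partial>M))"
proof -
  assume j: "j < N * d"
  let ?q = "(N - 1) * d"
  have e: "\<And>\<omega>. u_entry \<eta> \<Theta> i \<omega> * w_entry j \<omega> = \<eta> $ i * w_entry j \<omega>
     + (\<Sum>k<?q. \<Theta> $$ (i,k) * (w_entry j \<omega> * phi_entry k \<omega>))"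
    unfolding u_entry_def by (simp add: algebra_simps sum_distrib_left sum_distrib_right)
  have ipw: "\<And>k. k < ?q \<Longrightarrow> integrable M (\<lambda>\<omega>. w_entry j \<omega> * phi_entry k \<omega>)"
    using square_integrable_mult_integrable[OF square_integrable_w_entry[OF j] square_integrable_phi_entry]
      by blast
  have i3: "integrable M (\<lambda>\<omega>. \<Sum>k<?q. \<Theta> $$ (i,k) * (w_entry j \<omega> * phi_entry k \<omega>))"
    by (intro Bochner_Integration.integrable_sum integrable_mult_right) (simp add: ipw)
  have z3: "(\<integral>\<omega>. (\<Sum>k<?q. \<Theta> $$ (i,k) * (w_entry j \<omega> * phi_entry k \<omega>)) \<partial>M)
     = (\<Sum>k<?q. \<Theta> $$ (i,k) * (\<integral>\<omega>. w_entry j \<omega> * phi_entry k \<omega> \<partial>M))"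
    by (simp add: ipw Bochner_Integration.integral_sum integrable_mult_right)
  show ?thesis unfolding e using i3 z3 integrable_w_entry[OF j] integral_w_entry[OF j] by simp
qed

definition "ua_entry \<eta> \<Theta> i \<omega> = s_diag i \<omega> * u_entry \<eta> \<Theta> i \<omega>"

definition "x_entry A B x \<eta> \<Theta> a \<omega> = (calA d N A *\<^sub>v x) $ a + (\<Sum>i<N * m. calB d m N A B $$ (a,i) * ua_entry \<eta> \<Theta> i \<omega>)
    + (\<Sum>j<N * d. calD d N A $$ (a,j) * w_entry j \<omega>)"

lemma index_Smat: "i < N * m \<Longrightarrow> j < N * m \<Longrightarrow> Smat m N \<kappa> \<nu> t \<omega> $$ (i,j) = (if i = j then s_diag i \<omega> else 0)"
  unfolding Smat_def s_diag_def by auto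

lemma index_Phistack: "k < (N - 1) * d \<Longrightarrow> Phistack d N \<phi> w t \<omega> $ k = phi_entry k \<omega>"
  unfolding Phistack_def phi_entry_def by simp

lemma index_Wstack: "j < N * d \<Longrightarrow> Wstack d N w t \<omega> $ j = w_entry j \<omega>"
  unfolding Wstack_def w_entry_def by simp

lemma stacked_dims[simp]:
  "dim_row (calA d N A) = Suc N * d" "dim_col (calA d N A) = d"
  "dim_row (calB d m N A B) = Suc N * d" "dim_col (calB d m N A B) = N * m"
  "dim_row (calD d N A) = Suc N * d" "dim_col (calD d N A) = N * d"
  "dim_row (calQ d N Q Qf) = Suc N * d" "dim_col (calQ d N Q Qf) = Suc N * d"
  "dim_row (calR m N R) = N * m" "dim_col (calR m N R) = N * m"
  "dim_row (Smat m N \<kappa> \<nu> t \<omega>) = N * m" "dim_col (Smat m N \<kappa> \<nu> t \<omega>) = N * m"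
  "dim_vec (Phistack d N \<phi> w t \<omega>) = (N - 1) * d" "dim_vec (Wstack d N w t \<omega>) = N * d"
  by (simp_all add: calA_def calB_def calD_def calQ_def calR_def Smat_def Phistack_def Wstack_def del: mult_Suc)

lemma index_ctrl:
  assumes "\<eta> \<in> carrier_vec (N * m)" "\<Theta> \<in> carrier_mat (N * m) ((N - 1) * d)" "i < N * m"
  shows "ctrl d N \<phi> w t \<eta> \<Theta> \<omega> $ i = u_entry \<eta> \<Theta> i \<omega>"
proof -
  have "(\<Theta> *\<^sub>v Phistack d N \<phi> w t \<omega>) $ i = (\<Sum>k<(N - 1) * d. \<Theta> $$ (i,k) * Phistack d N \<phi> w t \<omega> $ k)"
    using assms by (subst index_mult_mat_vec_sum) auto
  also have "\<dots> = (\<Sum>k<(N - 1) * d. \<Theta> $$ (i,k) * phi_entry k \<omega>)"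
    by (simp add: index_Phistack)
  finally show ?thesis using assms unfolding ctrl_def u_entry_def by simp
qed

lemma dim_ctrl:
  assumes "\<eta> \<in> carrier_vec (N * m)" "\<Theta> \<in> carrier_mat (N * m) ((N - 1) * d)"
  shows "dim_vec (ctrl d N \<phi> w t \<eta> \<Theta> \<omega>) = N * m"
  using assms unfolding ctrl_def by simp

lemma index_ctrl_applied:
  assumes "\<eta> \<in> carrier_vec (N * m)" "\<Theta> \<in> carrier_mat (N * m) ((N - 1) * d)" "i < N * m"
  shows "ctrl_applied d m N \<kappa> \<phi> w \<nu> t \<eta> \<Theta> \<omega> $ i = ua_entry \<eta> \<Theta> i \<omega>"
proof -
  have "ctrl_applied d m N \<kappa> \<phi> w \<nu> t \<eta> \<Theta> \<omega> $ i
     = (\<Sum>j<N * m. Smat m N \<kappa> \<nu> t \<omega> $$ (i,j) * ctrl d N \<phi> w t \<eta> \<Theta> \<omega> $ j)"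
    unfolding ctrl_applied_def using assms by (subst index_mult_mat_vec_sum) (auto simp: dim_ctrl)
  also have "\<dots> = (\<Sum>j<N * m. if j = i then s_diag i \<omega> * ctrl d N \<phi> w t \<eta> \<Theta> \<omega> $ j else 0)"
    by (rule sum.cong[OF refl]) (use assms(3) in \<open>auto simp: index_Smat\<close>)
  also have "\<dots> = ua_entry \<eta> \<Theta> i \<omega>" using assms by (simp add: index_ctrl ua_entry_def)
  finally show ?thesis .
qed

lemma dim_ctrl_applied: "dim_vec (ctrl_applied d m N \<kappa> \<phi> w \<nu> t \<eta> \<Theta> \<omega>) = N * m"
  unfolding ctrl_applied_def by simp

lemma index_state_stack:
  assumes "\<eta> \<in> carrier_vec (N * m)" "\<Theta> \<in> carrier_mat (N * m) ((N - 1) * d)" "a < Suc N * d"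
    "x \<in> carrier_vec d"
  shows "state_stack d m N \<kappa> A B \<phi> w \<nu> t x \<eta> \<Theta> \<omega> $ a = x_entry A B x \<eta> \<Theta> a \<omega>"
proof -
  have "(calB d m N A B *\<^sub>v ctrl_applied d m N \<kappa> \<phi> w \<nu> t \<eta> \<Theta> \<omega>) $ a
      = (\<Sum>i<N * m. calB d m N A B $$ (a,i) * ua_entry \<eta> \<Theta> i \<omega>)"
    using assms by (subst index_mult_mat_vec_sum) (auto simp: dim_ctrl_applied index_ctrl_applied)
  moreover have "(calD d N A *\<^sub>v Wstack d N w t \<omega>) $ a = (\<Sum>j<N * d. calD d N A $$ (a,j) * w_entry j \<omega>)"
    using assms by (subst index_mult_mat_vec_sum) (auto simp: index_Wstack)
  ultimately show ?thesis using assms unfolding state_stack_def x_entry_def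
    by simp
qed

lemma dim_state_stack: "dim_vec (state_stack d m N \<kappa> A B \<phi> w \<nu> t x \<eta> \<Theta> \<omega>) = Suc N * d"
  unfolding state_stack_def by (simp del: mult_Suc)

lemma stage_cost_entries:
  assumes "\<eta> \<in> carrier_vec (N * m)" "\<Theta> \<in> carrier_mat (N * m) ((N - 1) * d)"
    "x \<in> carrier_vec d"
  shows "stage_cost d m N \<kappa> A B Q Qf R \<phi> w \<nu> t x \<eta> \<Theta> \<omega> =
    (\<Sum>a<Suc N * d. x_entry A B x \<eta> \<Theta> a \<omega> * (\<Sum>b<Suc N * d. calQ d N Q Qf $$ (a,b) * x_entry A B x \<eta> \<Theta> b \<omega>))
  + (\<Sum>i<N * m. ua_entry \<eta> \<Theta> i \<omega> * (\<Sum>j<N * m. calR m N R $$ (i,j) * ua_entry \<eta> \<Theta> j \<omega>))"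
proof -
  have q: "\<And>a. a < Suc N * d \<Longrightarrow> (calQ d N Q Qf *\<^sub>v state_stack d m N \<kappa> A B \<phi> w \<nu> t x \<eta> \<Theta> \<omega>) $ a
     = (\<Sum>b<Suc N * d. calQ d N Q Qf $$ (a,b) * x_entry A B x \<eta> \<Theta> b \<omega>)"
    using assms
      by (subst index_mult_mat_vec_sum) (auto simp: dim_state_stack index_state_stack simp del: mult_Suc)
  have r: "\<And>i. i < N * m \<Longrightarrow> (calR m N R *\<^sub>v ctrl_applied d m N \<kappa> \<phi> w \<nu> t \<eta> \<Theta> \<omega>) $ i
     = (\<Sum>j<N * m. calR m N R $$ (i,j) * ua_entry \<eta> \<Theta> j \<omega>)"
    using assms by (subst index_mult_mat_vec_sum) (auto simp: dim_ctrl_applied index_ctrl_applied)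
  show ?thesis unfolding stage_cost_def Let_def scalar_prod_def
    using assms
      by (simp add: atLeast0LessThan dim_state_stack dim_ctrl_applied q r index_state_stack index_ctrl_applied del: mult_Suc index_mult_mat_vec)
qed

lemma square_integrable_ua_entry: "square_integrable (ua_entry \<eta> \<Theta> i)"
  unfolding ua_entry_def
    by (rule square_integrable_mult_bounded[OF square_integrable_s_diag square_integrable_u_entry abs_s_diag_le_1])

definition "Bu_entry A B \<eta> \<Theta> a \<omega> = (\<Sum>i<N * m. calB d m N A B $$ (a,i) * ua_entry \<eta> \<Theta> i \<omega>)"

definition "Dw_entry A a \<omega> = (\<Sum>j<N * d. calD d N A $$ (a,j) * w_entry j \<omega>)"

lemma square_integrable_Bu_entry: "square_integrable (Bu_entry A B \<eta> \<Theta> a)"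
  unfolding Bu_entry_def
    by (intro square_integrable_sum square_integrable_cmult square_integrable_ua_entry) auto

lemma square_integrable_Dw_entry: "square_integrable (Dw_entry A a)"
  unfolding Dw_entry_def
    by (intro square_integrable_sum square_integrable_cmult square_integrable_w_entry) auto

lemma x_entry_decompose: "x_entry A B x \<eta> \<Theta> a \<omega> = (calA d N A *\<^sub>v x) $ a + Bu_entry A B \<eta> \<Theta> a \<omega> + Dw_entry A a \<omega>"
  unfolding x_entry_def Bu_entry_def Dw_entry_def by simp

lemma square_integrable_x_entry: "square_integrable (x_entry A B x \<eta> \<Theta> a)"
  unfolding x_entry_decompose
    by (intro square_integrable_add square_integrable_const square_integrable_Bu_entry square_integrable_Dw_entry)

lemma integral_Bu_entry: "(\<integral>\<omega>. Bu_entry A B \<eta> \<Theta> a \<omega> \<partial>M) = (\<Sum>i<N * m. calB d m N A B $$ (a,i) * ((\<integral>\<omega>. s_diag i \<omega> \<partial>M) * \<eta> $ i))"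
  unfolding Bu_entry_def
    using square_integrable_integrable[OF square_integrable_ua_entry, unfolded ua_entry_def]
  by (subst Bochner_Integration.integral_sum) (auto simp: ua_entry_def integral_s_diag_u_entry)

lemma integral_Dw_entry: "(\<integral>\<omega>. Dw_entry A a \<omega> \<partial>M) = 0"
  unfolding Dw_entry_def using integrable_w_entry integral_w_entry
  by (subst Bochner_Integration.integral_sum) auto

lemma integral_ua_entry_products: "(\<integral>\<omega>. ua_entry \<eta> \<Theta> i \<omega> * ua_entry \<eta> \<Theta> j \<omega> \<partial>M) =
   (\<integral>\<omega>. s_diag i \<omega> * s_diag j \<omega> \<partial>M) * (\<integral>\<omega>. u_entry \<eta> \<Theta> i \<omega> * u_entry \<eta> \<Theta> j \<omega> \<partial>M)"
  unfolding ua_entry_def by (rule integral_s_diag_u_entry_products)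

lemma integral_ua_entry_w_entry: "j < N * d \<Longrightarrow> (\<integral>\<omega>. ua_entry \<eta> \<Theta> i \<omega> * w_entry j \<omega> \<partial>M) =
   (\<integral>\<omega>. s_diag i \<omega> \<partial>M) * (\<integral>\<omega>. u_entry \<eta> \<Theta> i \<omega> * w_entry j \<omega> \<partial>M)"
  unfolding ua_entry_def by (rule integral_s_diag_u_entry_w_entry)

lemma integral_Bu_entry_products: "(\<integral>\<omega>. Bu_entry A B \<eta> \<Theta> a \<omega> * Bu_entry A B \<eta> \<Theta> b \<omega> \<partial>M) =
  (\<Sum>i<N * m. \<Sum>j<N * m. (calB d m N A B $$ (a,i) * calB d m N A B $$ (b,j)) *
      ((\<integral>\<omega>. s_diag i \<omega> * s_diag j \<omega> \<partial>M) * (\<integral>\<omega>. u_entry \<eta> \<Theta> i \<omega> * u_entry \<eta> \<Theta> j \<omega> \<partial>M)))"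
proof -
  have e: "\<And>\<omega>. Bu_entry A B \<eta> \<Theta> a \<omega> * Bu_entry A B \<eta> \<Theta> b \<omega> = (\<Sum>i<N * m. \<Sum>j<N * m.
     (calB d m N A B $$ (a,i) * calB d m N A B $$ (b,j)) * (ua_entry \<eta> \<Theta> i \<omega> * ua_entry \<eta> \<Theta> j \<omega>))"
    unfolding Bu_entry_def sum_product by (simp add: mult_ac)
  show ?thesis unfolding e
    by (subst integral_double_sum(2)) (auto simp: square_integrable_mult_integrable[OF square_integrable_ua_entry square_integrable_ua_entry] integral_ua_entry_products)
qed

lemma integral_Bu_Dw_entry_products: "(\<integral>\<omega>. Bu_entry A B \<eta> \<Theta> a \<omega> * Dw_entry A b \<omega> \<partial>M) =
  (\<Sum>i<N * m. \<Sum>j<N * d. (calB d m N A B $$ (a,i) * calD d N A $$ (b,j)) *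
      ((\<integral>\<omega>. s_diag i \<omega> \<partial>M) * (\<integral>\<omega>. u_entry \<eta> \<Theta> i \<omega> * w_entry j \<omega> \<partial>M)))"
proof -
  have e: "\<And>\<omega>. Bu_entry A B \<eta> \<Theta> a \<omega> * Dw_entry A b \<omega> = (\<Sum>i<N * m. \<Sum>j<N * d.
     (calB d m N A B $$ (a,i) * calD d N A $$ (b,j)) * (ua_entry \<eta> \<Theta> i \<omega> * w_entry j \<omega>))"
    unfolding Bu_entry_def Dw_entry_def sum_product by (simp add: mult_ac)
  show ?thesis unfolding e
    by (subst integral_double_sum(2)) (auto simp: square_integrable_mult_integrable[OF square_integrable_ua_entry square_integrable_w_entry] integral_ua_entry_w_entry)
qed

lemma integral_Dw_entry_products: "(\<integral>\<omega>. Dw_entry A a \<omega> * Dw_entry A b \<omega> \<partial>M) =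
  (\<Sum>i<N * d. \<Sum>j<N * d. (calD d N A $$ (a,i) * calD d N A $$ (b,j)) * (\<integral>\<omega>. w_entry i \<omega> * w_entry j \<omega> \<partial>M))"
proof -
  have e: "\<And>\<omega>. Dw_entry A a \<omega> * Dw_entry A b \<omega> = (\<Sum>i<N * d. \<Sum>j<N * d.
     (calD d N A $$ (a,i) * calD d N A $$ (b,j)) * (w_entry i \<omega> * w_entry j \<omega>))"
    unfolding Dw_entry_def sum_product by (simp add: mult_ac)
  show ?thesis unfolding e
    by (subst integral_double_sum(2)) (auto simp: square_integrable_mult_integrable[OF square_integrable_w_entry square_integrable_w_entry])
qed

lemma integral_x_entry_products: "(\<integral>\<omega>. x_entry A B x \<eta> \<Theta> a \<omega> * x_entry A B x \<eta> \<Theta> b \<omega> \<partial>M) =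
   (calA d N A *\<^sub>v x) $ a * (calA d N A *\<^sub>v x) $ b
 + (calA d N A *\<^sub>v x) $ a * (\<integral>\<omega>. Bu_entry A B \<eta> \<Theta> b \<omega> \<partial>M)
 + (calA d N A *\<^sub>v x) $ b * (\<integral>\<omega>. Bu_entry A B \<eta> \<Theta> a \<omega> \<partial>M)
 + (\<integral>\<omega>. Bu_entry A B \<eta> \<Theta> a \<omega> * Bu_entry A B \<eta> \<Theta> b \<omega> \<partial>M)
 + (\<integral>\<omega>. Bu_entry A B \<eta> \<Theta> a \<omega> * Dw_entry A b \<omega> \<partial>M)
 + (\<integral>\<omega>. Bu_entry A B \<eta> \<Theta> b \<omega> * Dw_entry A a \<omega> \<partial>M)
 + (\<integral>\<omega>. Dw_entry A a \<omega> * Dw_entry A b \<omega> \<partial>M)"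
proof -
  let ?a = "(calA d N A *\<^sub>v x) $ a" and ?b = "(calA d N A *\<^sub>v x) $ b"
  have e: "\<And>\<omega>. x_entry A B x \<eta> \<Theta> a \<omega> * x_entry A B x \<eta> \<Theta> b \<omega> =
    ?a * ?b + ?a * Bu_entry A B \<eta> \<Theta> b \<omega> + ?a * Dw_entry A b \<omega> + ?b * Bu_entry A B \<eta> \<Theta> a \<omega> + ?b * Dw_entry A a \<omega>
    + Bu_entry A B \<eta> \<Theta> a \<omega> * Bu_entry A B \<eta> \<Theta> b \<omega> + Bu_entry A B \<eta> \<Theta> a \<omega> * Dw_entry A b \<omega>
    + Bu_entry A B \<eta> \<Theta> b \<omega> * Dw_entry A a \<omega> + Dw_entry A a \<omega> * Dw_entry A b \<omega>"
    unfolding x_entry_decompose by (simp add: algebra_simps)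
  have i1: "\<And>a. integrable M (Bu_entry A B \<eta> \<Theta> a)" using square_integrable_integrable[OF square_integrable_Bu_entry]
    by simp
  have i2: "\<And>a. integrable M (Dw_entry A a)" using square_integrable_integrable[OF square_integrable_Dw_entry]
    by simp
  have i3: "\<And>a b. integrable M (\<lambda>\<omega>. Bu_entry A B \<eta> \<Theta> a \<omega> * Bu_entry A B \<eta> \<Theta> b \<omega>)"
    by (rule square_integrable_mult_integrable[OF square_integrable_Bu_entry square_integrable_Bu_entry])
  have i4: "\<And>a b. integrable M (\<lambda>\<omega>. Bu_entry A B \<eta> \<Theta> a \<omega> * Dw_entry A b \<omega>)"
    by (rule square_integrable_mult_integrable[OF square_integrable_Bu_entry square_integrable_Dw_entry])
  have i5: "\<And>a b. integrable M (\<lambda>\<omega>. Dw_entry A a \<omega> * Dw_entry A b \<omega>)"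
    by (rule square_integrable_mult_integrable[OF square_integrable_Dw_entry square_integrable_Dw_entry])
  show ?thesis unfolding e using i1 i2 i3 i4 i5 by (simp add: integral_Dw_entry prob_space)
qed

lemma integral_stage_cost_entries:
  assumes "\<eta> \<in> carrier_vec (N * m)" "\<Theta> \<in> carrier_mat (N * m) ((N - 1) * d)"
    "x \<in> carrier_vec d"
  shows "integrable M (stage_cost d m N \<kappa> A B Q Qf R \<phi> w \<nu> t x \<eta> \<Theta>)"
    "(\<integral>\<omega>. stage_cost d m N \<kappa> A B Q Qf R \<phi> w \<nu> t x \<eta> \<Theta> \<omega> \<partial>M) =
    (\<Sum>a<Suc N * d. \<Sum>b<Suc N * d. calQ d N Q Qf $$ (a,b) * (\<integral>\<omega>. x_entry A B x \<eta> \<Theta> a \<omega> * x_entry A B x \<eta> \<Theta> b \<omega> \<partial>M))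
  + (\<Sum>i<N * m. \<Sum>j<N * m. calR m N R $$ (i,j) * (\<integral>\<omega>. ua_entry \<eta> \<Theta> i \<omega> * ua_entry \<eta> \<Theta> j \<omega> \<partial>M))"
proof -
  have e: "\<And>\<omega>. stage_cost d m N \<kappa> A B Q Qf R \<phi> w \<nu> t x \<eta> \<Theta> \<omega> =
    (\<Sum>a<Suc N * d. \<Sum>b<Suc N * d. calQ d N Q Qf $$ (a,b) * (x_entry A B x \<eta> \<Theta> a \<omega> * x_entry A B x \<eta> \<Theta> b \<omega>))
  + (\<Sum>i<N * m. \<Sum>j<N * m. calR m N R $$ (i,j) * (ua_entry \<eta> \<Theta> i \<omega> * ua_entry \<eta> \<Theta> j \<omega>))"
    unfolding stage_cost_entries[OF assms] by (simp add: sum_distrib_left mult_ac)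
  have i1: "integrable M (\<lambda>\<omega>. \<Sum>a<Suc N * d. \<Sum>b<Suc N * d. calQ d N Q Qf $$ (a,b) * (x_entry A B x \<eta> \<Theta> a \<omega> * x_entry A B x \<eta> \<Theta> b \<omega>))"
    by (rule integral_double_sum(1)) (auto intro: square_integrable_mult_integrable square_integrable_x_entry)
  have i2: "integrable M (\<lambda>\<omega>. \<Sum>i<N * m. \<Sum>j<N * m. calR m N R $$ (i,j) * (ua_entry \<eta> \<Theta> i \<omega> * ua_entry \<eta> \<Theta> j \<omega>))"
    by (rule integral_double_sum(1)) (auto intro: square_integrable_mult_integrable square_integrable_ua_entry)
  show "integrable M (stage_cost d m N \<kappa> A B Q Qf R \<phi> w \<nu> t x \<eta> \<Theta>)"
    unfolding e using i1 i2 by simp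
  show "(\<integral>\<omega>. stage_cost d m N \<kappa> A B Q Qf R \<phi> w \<nu> t x \<eta> \<Theta> \<omega> \<partial>M) =
    (\<Sum>a<Suc N * d. \<Sum>b<Suc N * d. calQ d N Q Qf $$ (a,b) * (\<integral>\<omega>. x_entry A B x \<eta> \<Theta> a \<omega> * x_entry A B x \<eta> \<Theta> b \<omega> \<partial>M))
  + (\<Sum>i<N * m. \<Sum>j<N * m. calR m N R $$ (i,j) * (\<integral>\<omega>. ua_entry \<eta> \<Theta> i \<omega> * ua_entry \<eta> \<Theta> j \<omega> \<partial>M))"
    unfolding e using i1 i2
    by (simp add: integral_double_sum(2)[where f="\<lambda>a b \<omega>. x_entry A B x \<eta> \<Theta> a \<omega> * x_entry A B x \<eta> \<Theta> b \<omega>"]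
        integral_double_sum(2)[where f="\<lambda>a b \<omega>. ua_entry \<eta> \<Theta> a \<omega> * ua_entry \<eta> \<Theta> b \<omega>"] square_integrable_mult_integrable square_integrable_x_entry square_integrable_ua_entry
        del: mult_Suc)
qed

definition "mean_s i = (\<integral>\<omega>. s_diag i \<omega> \<partial>M)"

definition "moment_s i j = (\<integral>\<omega>. s_diag i \<omega> * s_diag j \<omega> \<partial>M)"

definition "moment_phi k l = (\<integral>\<omega>. phi_entry k \<omega> * phi_entry l \<omega> \<partial>M)"

definition "moment_w_phi j k = (\<integral>\<omega>. w_entry j \<omega> * phi_entry k \<omega> \<partial>M)"

definition "moment_w i j = (\<integral>\<omega>. w_entry i \<omega> * w_entry j \<omega> \<partial>M)"

definition "mu_S = mat_expect M (N * m) (N * m) (Smat m N \<kappa> \<nu> t)"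

definition "Sigma_S H = mat_expect M (N * m) (N * m) (\<lambda>\<omega>. (Smat m N \<kappa> \<nu> t \<omega>)\<^sup>T * H * Smat m N \<kappa> \<nu> t \<omega>)"

definition "Sigma_phi = mat_expect M ((N - 1) * d) ((N - 1) * d)
  (\<lambda>\<omega>. outer (Phistack d N \<phi> w t \<omega>) (Phistack d N \<phi> w t \<omega>))"

definition "Sigma_w_phi = mat_expect M (N * d) ((N - 1) * d)
  (\<lambda>\<omega>. outer (Wstack d N w t \<omega>) (Phistack d N \<phi> w t \<omega>))"

definition "Sigma_w = mat_expect M (N * d) (N * d) (\<lambda>\<omega>. outer (Wstack d N w t \<omega>) (Wstack d N w t \<omega>))"

lemma moment_matrices_carrier:
  "mu_S \<in> carrier_mat (N * m) (N * m)" "Sigma_S H \<in> carrier_mat (N * m) (N * m)"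
  "Sigma_phi \<in> carrier_mat ((N - 1) * d) ((N - 1) * d)" "Sigma_w_phi \<in> carrier_mat (N * d) ((N - 1) * d)"
  "Sigma_w \<in> carrier_mat (N * d) (N * d)"
  unfolding mu_S_def Sigma_S_def Sigma_phi_def Sigma_w_phi_def Sigma_w_def by auto

lemma index_mu_S: "i < N * m \<Longrightarrow> j < N * m \<Longrightarrow> mu_S $$ (i,j) = (if i = j then mean_s i else 0)"
  unfolding mu_S_def mean_s_def by (simp add: index_mat_expect index_Smat)

lemma index_Sigma_S:
  assumes "H \<in> carrier_mat (N * m) (N * m)" "i < N * m" "j < N * m"
  shows "Sigma_S H $$ (i,j) = H $$ (i,j) * moment_s i j"
proof -
  have "((Smat m N \<kappa> \<nu> t \<omega>)\<^sup>T * H * Smat m N \<kappa> \<nu> t \<omega>) $$ (i,j) = H $$ (i,j) * (s_diag i \<omega> * s_diag j \<omega>)" for \<omega>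
  proof -
    have "((Smat m N \<kappa> \<nu> t \<omega>)\<^sup>T * H * Smat m N \<kappa> \<nu> t \<omega>) $$ (i,j)
       = (\<Sum>k<N * m. ((Smat m N \<kappa> \<nu> t \<omega>)\<^sup>T * H) $$ (i,k) * Smat m N \<kappa> \<nu> t \<omega> $$ (k,j))"
      using assms by (simp add: scalar_prod_def atLeast0LessThan)
    also have "\<dots> = ((Smat m N \<kappa> \<nu> t \<omega>)\<^sup>T * H) $$ (i,j) * s_diag j \<omega>"
      using assms by (simp add: index_Smat if_distrib cong: if_cong)
    also have "((Smat m N \<kappa> \<nu> t \<omega>)\<^sup>T * H) $$ (i,j) = (\<Sum>k<N * m. Smat m N \<kappa> \<nu> t \<omega> $$ (k,i) * H $$ (k,j))"
      using assms by (simp add: scalar_prod_def atLeast0LessThan)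
    also have "\<dots> = (\<Sum>k<N * m. if k = i then s_diag i \<omega> * H $$ (i,j) else 0)"
      by (rule sum.cong[OF refl]) (use assms in \<open>auto simp: index_Smat\<close>)
    also have "\<dots> = s_diag i \<omega> * H $$ (i,j)"
      using assms by simp
    finally show ?thesis by (simp add: mult_ac)
  qed
  then show ?thesis using assms by (simp add: Sigma_S_def moment_s_def index_mat_expect)
qed

lemma index_Sigma_phi: "k < (N - 1) * d \<Longrightarrow> l < (N - 1) * d \<Longrightarrow> Sigma_phi $$ (k,l) = moment_phi k l"
  unfolding Sigma_phi_def moment_phi_def by (simp add: index_mat_expect index_outer index_Phistack)

lemma index_Sigma_w_phi: "j < N * d \<Longrightarrow> l < (N - 1) * d \<Longrightarrow> Sigma_w_phi $$ (j,l) = moment_w_phi j l"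
  unfolding Sigma_w_phi_def moment_w_phi_def
    by (simp add: index_mat_expect index_outer index_Phistack index_Wstack)

lemma index_Sigma_w: "i < N * d \<Longrightarrow> j < N * d \<Longrightarrow> Sigma_w $$ (i,j) = moment_w i j"
  unfolding Sigma_w_def moment_w_def by (simp add: index_mat_expect index_outer index_Wstack)

lemma moment_phi_sym: "moment_phi k l = moment_phi l k"
  and moment_w_sym: "moment_w i j = moment_w j i"
  unfolding moment_phi_def moment_w_def by (simp_all add: mult.commute)

definition "moment_u \<eta> \<Theta> i j =
  \<eta> $ i * \<eta> $ j + (\<Sum>k<(N - 1) * d. \<Sum>l<(N - 1) * d. \<Theta> $$ (i,k) * \<Theta> $$ (j,l) * moment_phi k l)"

definition "mean_Bu A B \<eta> a = (\<Sum>i<N * m. calB d m N A B $$ (a,i) * (mean_s i * \<eta> $ i))"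

definition "moment_Bu A B \<eta> \<Theta> a b = (\<Sum>i<N * m. \<Sum>j<N * m.
  (calB d m N A B $$ (a,i) * calB d m N A B $$ (b,j)) * (moment_s i j * moment_u \<eta> \<Theta> i j))"

definition "moment_Bu_Dw A B \<Theta> a b = (\<Sum>i<N * m. \<Sum>j<N * d.
  (calB d m N A B $$ (a,i) * calD d N A $$ (b,j)) * (mean_s i * (\<Sum>k<(N - 1) * d. \<Theta> $$ (i,k) * moment_w_phi j k)))"

definition "moment_Dw A a b = (\<Sum>i<N * d. \<Sum>j<N * d. (calD d N A $$ (a,i) * calD d N A $$ (b,j)) * moment_w i j)"

lemma integral_stage_cost_moments:
  fixes A B Q Qf R :: "real mat" and x :: "real Matrix.vec"
  assumes eta: "\<eta> \<in> carrier_vec (N * m)" and Th: "\<Theta> \<in> carrier_mat (N * m) ((N - 1) * d)"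
    and x: "x \<in> carrier_vec d"
    and Q_sym: "\<And>a b. a < Suc N * d \<Longrightarrow> b < Suc N * d \<Longrightarrow> calQ d N Q Qf $$ (b,a) = calQ d N Q Qf $$ (a,b)"
  defines "\<alpha> a \<equiv> (calA d N A *\<^sub>v x) $ a" and "nb \<equiv> Suc N * d"
  shows "(\<integral>\<omega>. stage_cost d m N \<kappa> A B Q Qf R \<phi> w \<nu> t x \<eta> \<Theta> \<omega> \<partial>M) =
     (\<Sum>a<nb. \<Sum>b<nb. calQ d N Q Qf $$ (a,b) * (\<alpha> a * \<alpha> b))
     + 2 * (\<Sum>a<nb. \<Sum>b<nb. calQ d N Q Qf $$ (a,b) * (\<alpha> a * mean_Bu A B \<eta> b))
     + (\<Sum>a<nb. \<Sum>b<nb. calQ d N Q Qf $$ (a,b) * moment_Bu A B \<eta> \<Theta> a b)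
     + 2 * (\<Sum>a<nb. \<Sum>b<nb. calQ d N Q Qf $$ (a,b) * moment_Bu_Dw A B \<Theta> a b)
     + (\<Sum>a<nb. \<Sum>b<nb. calQ d N Q Qf $$ (a,b) * moment_Dw A a b)
     + (\<Sum>i<N * m. \<Sum>j<N * m. calR m N R $$ (i,j) * (moment_s i j * moment_u \<eta> \<Theta> i j))"
proof -
  let ?cQ = "\<lambda>a b. calQ d N Q Qf $$ (a,b)"
  have xx: "(\<integral>\<omega>. x_entry A B x \<eta> \<Theta> a \<omega> * x_entry A B x \<eta> \<Theta> b \<omega> \<partial>M)
     = \<alpha> a * \<alpha> b + \<alpha> a * mean_Bu A B \<eta> b + \<alpha> b * mean_Bu A B \<eta> a + moment_Bu A B \<eta> \<Theta> a b
       + moment_Bu_Dw A B \<Theta> a b + moment_Bu_Dw A B \<Theta> b a + moment_Dw A a b" for a b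
    unfolding integral_x_entry_products integral_Bu_entry integral_Bu_entry_products
      integral_Bu_Dw_entry_products integral_Dw_entry_products
    by (simp add: \<alpha>_def mean_Bu_def moment_Bu_def moment_Bu_Dw_def moment_Dw_def mean_s_def moment_s_def
        moment_u_def integral_u_entry_products integral_u_entry_w_entry moment_phi_def moment_w_phi_def moment_w_def)
  have uu: "(\<integral>\<omega>. ua_entry \<eta> \<Theta> i \<omega> * ua_entry \<eta> \<Theta> j \<omega> \<partial>M) = moment_s i j * moment_u \<eta> \<Theta> i j" for i j
    unfolding integral_ua_entry_products integral_u_entry_products moment_s_def moment_u_def moment_phi_def ..
  have swap1: "(\<Sum>a<nb. \<Sum>b<nb. ?cQ a b * (\<alpha> b * mean_Bu A B \<eta> a)) = (\<Sum>a<nb. \<Sum>b<nb. ?cQ a b * (\<alpha> a * mean_Bu A B \<eta> b))"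
    by (rule sum_sum_symmetric_swap) (simp add: Q_sym nb_def)
  have swap2: "(\<Sum>a<nb. \<Sum>b<nb. ?cQ a b * moment_Bu_Dw A B \<Theta> b a) = (\<Sum>a<nb. \<Sum>b<nb. ?cQ a b * moment_Bu_Dw A B \<Theta> a b)"
    by (rule sum_sum_symmetric_swap) (simp add: Q_sym nb_def)
  show ?thesis
    unfolding integral_stage_cost_entries(2)[OF eta Th x] xx uu nb_def[symmetric]
    using swap1 swap2 by (simp add: distrib_left sum.distrib)
qed

lemma tractable_obj_moments:
  fixes A B Q Qf R :: "real mat" and x :: "real Matrix.vec"
  assumes eta: "\<eta> \<in> carrier_vec (N * m)" and Th: "\<Theta> \<in> carrier_mat (N * m) ((N - 1) * d)"
    and x: "x \<in> carrier_vec d"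
  defines "\<alpha> a \<equiv> (calA d N A *\<^sub>v x) $ a" and "nb \<equiv> Suc N * d"
  shows "tractable_obj M d m N \<kappa> A B Q Qf R \<phi> w \<nu> t x \<eta> \<Theta> =
     (\<Sum>a<nb. \<Sum>b<nb. calQ d N Q Qf $$ (a,b) * (\<alpha> a * \<alpha> b))
     + 2 * (\<Sum>a<nb. \<Sum>b<nb. calQ d N Q Qf $$ (a,b) * (\<alpha> a * mean_Bu A B \<eta> b))
     + (\<Sum>a<nb. \<Sum>b<nb. calQ d N Q Qf $$ (a,b) * moment_Bu A B \<eta> \<Theta> a b)
     + 2 * (\<Sum>a<nb. \<Sum>b<nb. calQ d N Q Qf $$ (a,b) * moment_Bu_Dw A B \<Theta> a b)
     + (\<Sum>a<nb. \<Sum>b<nb. calQ d N Q Qf $$ (a,b) * moment_Dw A a b)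
     + (\<Sum>i<N * m. \<Sum>j<N * m. calR m N R $$ (i,j) * (moment_s i j * moment_u \<eta> \<Theta> i j))"
proof -
  let ?cA = "calA d N A" and ?cB = "calB d m N A B" and ?cD = "calD d N A" and ?cQ = "calQ d N Q Qf"
    and ?cR = "calR m N R"
  have cA: "?cA \<in> carrier_mat nb d" and cB: "?cB \<in> carrier_mat nb (N * m)" and cD: "?cD \<in> carrier_mat nb (N * d)"
    and cQ: "?cQ \<in> carrier_mat nb nb" and cR: "?cR \<in> carrier_mat (N * m) (N * m)"
    unfolding nb_def by (auto simp del: mult_Suc)
  have H: "?cB\<^sup>T * ?cQ * ?cB + ?cR \<in> carrier_mat (N * m) (N * m)" using cB cQ cR by auto
  have state: "(\<Sum>a<nb. \<Sum>b<nb. ?cQ $$ (a,b) * (\<alpha> a * \<alpha> b)) = x \<bullet> ((?cA\<^sup>T * ?cQ * ?cA) *\<^sub>v x)"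
    unfolding \<alpha>_def by (rule sum_quadratic_form_mult_mat_vec[OF cA cQ x])
  have cross: "(\<Sum>a<nb. \<Sum>b<nb. ?cQ $$ (a,b) * (\<alpha> a * mean_Bu A B \<eta> b)) = x \<bullet> ((?cA\<^sup>T * ?cQ * ?cB * mu_S) *\<^sub>v \<eta>)"
    unfolding \<alpha>_def mean_Bu_def
    by (rule sum_cross_form_diagonal[OF cA cQ x cB moment_matrices_carrier(1) index_mu_S eta])
  have controls: "(\<Sum>a<nb. \<Sum>b<nb. ?cQ $$ (a,b) * moment_Bu A B \<eta> \<Theta> a b)
      + (\<Sum>i<N * m. \<Sum>j<N * m. ?cR $$ (i,j) * (moment_s i j * moment_u \<eta> \<Theta> i j))
     = \<eta> \<bullet> (Sigma_S (?cB\<^sup>T * ?cQ * ?cB + ?cR) *\<^sub>v \<eta>)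
       + mtrace (\<Theta>\<^sup>T * Sigma_S (?cB\<^sup>T * ?cQ * ?cB + ?cR) * \<Theta> * Sigma_phi)"
    unfolding moment_Bu_def moment_u_def
    by (rule sum_control_forms_trace[OF cB cQ cR moment_matrices_carrier(2,3) Th eta _ index_Sigma_phi
          moment_phi_sym])
      (use H cB cQ cR in \<open>simp add: index_Sigma_S\<close>)
  have control_noise: "(\<Sum>a<nb. \<Sum>b<nb. ?cQ $$ (a,b) * moment_Bu_Dw A B \<Theta> a b)
     = mtrace (\<Theta>\<^sup>T * mu_S\<^sup>T * ?cB\<^sup>T * ?cQ * ?cD * Sigma_w_phi)"
    unfolding moment_Bu_Dw_def
    by (rule sum_control_noise_form_trace[OF cB cQ cD moment_matrices_carrier(1,4) Th index_mu_S
          index_Sigma_w_phi])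
  have noise: "(\<Sum>a<nb. \<Sum>b<nb. ?cQ $$ (a,b) * moment_Dw A a b) = mtrace (?cD\<^sup>T * ?cQ * ?cD * Sigma_w)"
    unfolding moment_Dw_def
    by (rule sum_noise_form_trace[OF cD cQ moment_matrices_carrier(5) index_Sigma_w moment_w_sym])
  show ?thesis
    unfolding tractable_obj_def Let_def mu_S_def[symmetric] Sigma_S_def[symmetric] Sigma_phi_def[symmetric]
      Sigma_w_phi_def[symmetric] Sigma_w_def[symmetric]
    using state cross controls control_noise noise by linarith
qed

lemma integral_stage_cost_eq_tractable_obj:
  assumes "\<eta> \<in> carrier_vec (N * m)" "\<Theta> \<in> carrier_mat (N * m) ((N - 1) * d)" "x \<in> carrier_vec d"
    and "Q \<in> carrier_mat d d" "Qf \<in> carrier_mat d d" "Q\<^sup>T = Q" "Qf\<^sup>T = Qf"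
  shows "(\<integral>\<omega>. stage_cost d m N \<kappa> A B Q Qf R \<phi> w \<nu> t x \<eta> \<Theta> \<omega> \<partial>M)
     = tractable_obj M d m N \<kappa> A B Q Qf R \<phi> w \<nu> t x \<eta> \<Theta>"
  using integral_stage_cost_moments[OF assms(1-3) calQ_symmetric[OF assms(4-7)]]
    tractable_obj_moments[OF assms(1-3)] by simp

lemma sum_linear_comb: "(\<Sum>i\<in>I. l * f i + c * g i) = l * (\<Sum>i\<in>I. f i) + c * (\<Sum>i\<in>I. (g i :: real))"
  by (simp add: sum.distrib sum_distrib_left)

lemma u_entry_convex_comb:
  assumes "\<eta>1 \<in> carrier_vec (N * m)" "\<eta>2 \<in> carrier_vec (N * m)"
   "\<Theta>1 \<in> carrier_mat (N * m) ((N - 1) * d)" "\<Theta>2 \<in> carrier_mat (N * m) ((N - 1) * d)" "i < N * m"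
  shows "u_entry (l \<cdot>\<^sub>v \<eta>1 + (1 - l) \<cdot>\<^sub>v \<eta>2) (l \<cdot>\<^sub>m \<Theta>1 + (1 - l) \<cdot>\<^sub>m \<Theta>2) i \<omega>
     = l * u_entry \<eta>1 \<Theta>1 i \<omega> + (1 - l) * u_entry \<eta>2 \<Theta>2 i \<omega>"
proof -
  have "(\<Sum>k<(N - 1) * d. (l \<cdot>\<^sub>m \<Theta>1 + (1 - l) \<cdot>\<^sub>m \<Theta>2) $$ (i,k) * phi_entry k \<omega>)
      = (\<Sum>k<(N - 1) * d. l * (\<Theta>1 $$ (i,k) * phi_entry k \<omega>) + (1 - l) * (\<Theta>2 $$ (i,k) * phi_entry k \<omega>))"
    using assms by (intro sum.cong refl) (auto simp: algebra_simps)
  then show ?thesis unfolding u_entry_def sum_linear_comb using assms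
    by (simp add: algebra_simps)
qed

lemma x_entry_convex_comb:
  assumes "\<eta>1 \<in> carrier_vec (N * m)" "\<eta>2 \<in> carrier_vec (N * m)"
   "\<Theta>1 \<in> carrier_mat (N * m) ((N - 1) * d)" "\<Theta>2 \<in> carrier_mat (N * m) ((N - 1) * d)"
  shows "x_entry A B x (l \<cdot>\<^sub>v \<eta>1 + (1 - l) \<cdot>\<^sub>v \<eta>2) (l \<cdot>\<^sub>m \<Theta>1 + (1 - l) \<cdot>\<^sub>m \<Theta>2) a \<omega>
     = l * x_entry A B x \<eta>1 \<Theta>1 a \<omega> + (1 - l) * x_entry A B x \<eta>2 \<Theta>2 a \<omega>"
proof -
  have "(\<Sum>i<N * m. calB d m N A B $$ (a,i) * ua_entry (l \<cdot>\<^sub>v \<eta>1 + (1 - l) \<cdot>\<^sub>v \<eta>2) (l \<cdot>\<^sub>m \<Theta>1 + (1 - l) \<cdot>\<^sub>m \<Theta>2) i \<omega>)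
     = (\<Sum>i<N * m. l * (calB d m N A B $$ (a,i) * ua_entry \<eta>1 \<Theta>1 i \<omega>) + (1 - l) * (calB d m N A B $$ (a,i) * ua_entry \<eta>2 \<Theta>2 i \<omega>))"
    using assms by (intro sum.cong refl) (auto simp: ua_entry_def u_entry_convex_comb algebra_simps)
  then have Bs: "(\<Sum>i<N * m. calB d m N A B $$ (a,i) * ua_entry (l \<cdot>\<^sub>v \<eta>1 + (1 - l) \<cdot>\<^sub>v \<eta>2) (l \<cdot>\<^sub>m \<Theta>1 + (1 - l) \<cdot>\<^sub>m \<Theta>2) i \<omega>)
     = l * (\<Sum>i<N * m. calB d m N A B $$ (a,i) * ua_entry \<eta>1 \<Theta>1 i \<omega>) + (1 - l) * (\<Sum>i<N * m. calB d m N A B $$ (a,i) * ua_entry \<eta>2 \<Theta>2 i \<omega>)"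
    by (simp only: sum_linear_comb)
  show ?thesis unfolding x_entry_def Bs by (simp add: algebra_simps)
qed

lemma stage_cost_bilinear_forms:
  assumes "\<eta> \<in> carrier_vec (N * m)" "\<Theta> \<in> carrier_mat (N * m) ((N - 1) * d)" "x \<in> carrier_vec d"
  shows "stage_cost d m N \<kappa> A B Q Qf R \<phi> w \<nu> t x \<eta> \<Theta> \<omega> =
     bilinear_form (\<lambda>a b. calQ d N Q Qf $$ (a,b)) (Suc N * d) (\<lambda>a. x_entry A B x \<eta> \<Theta> a \<omega>) (\<lambda>a. x_entry A B x \<eta> \<Theta> a \<omega>)
   + bilinear_form (\<lambda>a b. calR m N R $$ (a,b)) (N * m) (\<lambda>a. ua_entry \<eta> \<Theta> a \<omega>) (\<lambda>a. ua_entry \<eta> \<Theta> a \<omega>)"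
  unfolding stage_cost_entries[OF assms] bilinear_form_def by simp

lemma stage_cost_convex:
  assumes "\<eta>1 \<in> carrier_vec (N * m)" "\<eta>2 \<in> carrier_vec (N * m)"
   "\<Theta>1 \<in> carrier_mat (N * m) ((N - 1) * d)" "\<Theta>2 \<in> carrier_mat (N * m) ((N - 1) * d)"
   "x \<in> carrier_vec d" "0 \<le> l" "l \<le> 1"
   and Qp: "\<And>v. 0 \<le> bilinear_form (\<lambda>a b. calQ d N Q Qf $$ (a,b)) (Suc N * d) v v"
   and Rp: "\<And>v. 0 \<le> bilinear_form (\<lambda>a b. calR m N R $$ (a,b)) (N * m) v v"
  shows "stage_cost d m N \<kappa> A B Q Qf R \<phi> w \<nu> t x (l \<cdot>\<^sub>v \<eta>1 + (1 - l) \<cdot>\<^sub>v \<eta>2) (l \<cdot>\<^sub>m \<Theta>1 + (1 - l) \<cdot>\<^sub>m \<Theta>2) \<omega>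
     \<le> l * stage_cost d m N \<kappa> A B Q Qf R \<phi> w \<nu> t x \<eta>1 \<Theta>1 \<omega> + (1 - l) * stage_cost d m N \<kappa> A B Q Qf R \<phi> w \<nu> t x \<eta>2 \<Theta>2 \<omega>"
proof -
  let ?e = "l \<cdot>\<^sub>v \<eta>1 + (1 - l) \<cdot>\<^sub>v \<eta>2" and ?T = "l \<cdot>\<^sub>m \<Theta>1 + (1 - l) \<cdot>\<^sub>m \<Theta>2"
  have ec: "?e \<in> carrier_vec (N * m)" using assms by auto
  have sum_control_forms_trace: "?T \<in> carrier_mat (N * m) ((N - 1) * d)" using assms by auto
  let ?CQ = "\<lambda>a b. calQ d N Q Qf $$ (a,b)" and ?CR = "\<lambda>a b. calR m N R $$ (a,b)"
  have x: "(\<lambda>a. x_entry A B x ?e ?T a \<omega>) = (\<lambda>a. l * x_entry A B x \<eta>1 \<Theta>1 a \<omega> + (1 - l) * x_entry A B x \<eta>2 \<Theta>2 a \<omega>)"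
    using x_entry_convex_comb[OF assms(1-4)] by auto
  have uu: "bilinear_form ?CR (N * m) (\<lambda>a. ua_entry ?e ?T a \<omega>) (\<lambda>a. ua_entry ?e ?T a \<omega>)
      = bilinear_form ?CR (N * m) (\<lambda>a. l * ua_entry \<eta>1 \<Theta>1 a \<omega> + (1 - l) * ua_entry \<eta>2 \<Theta>2 a \<omega>) (\<lambda>a. l * ua_entry \<eta>1 \<Theta>1 a \<omega> + (1 - l) * ua_entry \<eta>2 \<Theta>2 a \<omega>)"
    by (rule bilinear_form_cong) (use assms in \<open>simp add: ua_entry_def u_entry_convex_comb algebra_simps\<close>)
  have q: "bilinear_form ?CQ (Suc N * d) (\<lambda>a. x_entry A B x ?e ?T a \<omega>) (\<lambda>a. x_entry A B x ?e ?T a \<omega>)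
     \<le> l * bilinear_form ?CQ (Suc N * d) (\<lambda>a. x_entry A B x \<eta>1 \<Theta>1 a \<omega>) (\<lambda>a. x_entry A B x \<eta>1 \<Theta>1 a \<omega>)
       + (1 - l) * bilinear_form ?CQ (Suc N * d) (\<lambda>a. x_entry A B x \<eta>2 \<Theta>2 a \<omega>) (\<lambda>a. x_entry A B x \<eta>2 \<Theta>2 a \<omega>)"
    unfolding x by (rule quadratic_form_convex[OF Qp assms(6,7)])
  have r: "bilinear_form ?CR (N * m) (\<lambda>a. ua_entry ?e ?T a \<omega>) (\<lambda>a. ua_entry ?e ?T a \<omega>)
     \<le> l * bilinear_form ?CR (N * m) (\<lambda>a. ua_entry \<eta>1 \<Theta>1 a \<omega>) (\<lambda>a. ua_entry \<eta>1 \<Theta>1 a \<omega>)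
       + (1 - l) * bilinear_form ?CR (N * m) (\<lambda>a. ua_entry \<eta>2 \<Theta>2 a \<omega>) (\<lambda>a. ua_entry \<eta>2 \<Theta>2 a \<omega>)"
    unfolding uu by (rule quadratic_form_convex[OF Rp assms(6,7)])
  show ?thesis unfolding stage_cost_bilinear_forms[OF ec sum_control_forms_trace assms(5)] stage_cost_bilinear_forms[OF assms(1,3,5)] stage_cost_bilinear_forms[OF assms(2,4,5)]
    using q r by (simp add: algebra_simps)
qed

lemma index_ctrl_convex_comb:
  assumes "\<eta>1 \<in> carrier_vec (N * m)" "\<eta>2 \<in> carrier_vec (N * m)"
   "\<Theta>1 \<in> carrier_mat (N * m) ((N - 1) * d)" "\<Theta>2 \<in> carrier_mat (N * m) ((N - 1) * d)" "i < N * m"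
  shows "ctrl d N \<phi> w t (l \<cdot>\<^sub>v \<eta>1 + (1 - l) \<cdot>\<^sub>v \<eta>2) (l \<cdot>\<^sub>m \<Theta>1 + (1 - l) \<cdot>\<^sub>m \<Theta>2) \<omega> $ i
    = l * ctrl d N \<phi> w t \<eta>1 \<Theta>1 \<omega> $ i + (1 - l) * ctrl d N \<phi> w t \<eta>2 \<Theta>2 \<omega> $ i"
proof -
  have ec: "l \<cdot>\<^sub>v \<eta>1 + (1 - l) \<cdot>\<^sub>v \<eta>2 \<in> carrier_vec (N * m)" using assms
    by auto
  have sum_control_forms_trace: "l \<cdot>\<^sub>m \<Theta>1 + (1 - l) \<cdot>\<^sub>m \<Theta>2 \<in> carrier_mat (N * m) ((N - 1) * d)" using assms
    by auto
  show ?thesis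
    using index_ctrl[OF ec sum_control_forms_trace assms(5)] index_ctrl[OF assms(1,3,5)] index_ctrl[OF assms(2,4,5)] u_entry_convex_comb[OF assms]
    by simp
qed

lemma feasible_set_convex:
  assumes a: "(\<eta>1, \<Theta>1) \<in> feasible_set M d m N Umax \<phi> w t" and b: "(\<eta>2, \<Theta>2) \<in> feasible_set M d m N Umax \<phi> w t"
    and l: "0 \<le> l" "l \<le> 1"
  shows "(l \<cdot>\<^sub>v \<eta>1 + (1 - l) \<cdot>\<^sub>v \<eta>2, l \<cdot>\<^sub>m \<Theta>1 + (1 - l) \<cdot>\<^sub>m \<Theta>2) \<in> feasible_set M d m N Umax \<phi> w t"
proof -
  have e1: "\<eta>1 \<in> carrier_vec (N * m)" and T1: "\<Theta>1 \<in> carrier_mat (N * m) ((N - 1) * d)"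
    and s1: "strict_lower_block d m N \<Theta>1"
    and AE1: "AE \<omega> in M. \<forall>i < N * m. \<bar>ctrl d N \<phi> w t \<eta>1 \<Theta>1 \<omega> $ i\<bar> \<le> Umax"
    using a unfolding feasible_set_def by auto
  have e2: "\<eta>2 \<in> carrier_vec (N * m)" and T2: "\<Theta>2 \<in> carrier_mat (N * m) ((N - 1) * d)"
    and s2: "strict_lower_block d m N \<Theta>2"
    and AE2: "AE \<omega> in M. \<forall>i < N * m. \<bar>ctrl d N \<phi> w t \<eta>2 \<Theta>2 \<omega> $ i\<bar> \<le> Umax"
    using b unfolding feasible_set_def by auto
  let ?e = "l \<cdot>\<^sub>v \<eta>1 + (1 - l) \<cdot>\<^sub>v \<eta>2" and ?T = "l \<cdot>\<^sub>m \<Theta>1 + (1 - l) \<cdot>\<^sub>m \<Theta>2"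
  have "strict_lower_block d m N ?T"
    using s1 s2 T1 T2 unfolding strict_lower_block_def by auto
  moreover have "AE \<omega> in M. \<forall>i < N * m. \<bar>ctrl d N \<phi> w t ?e ?T \<omega> $ i\<bar> \<le> Umax"
    using AE1 AE2
  proof eventually_elim
    case (elim \<omega>)
    show ?case
    proof (intro allI impI)
      fix i assume i: "i < N * m"
      let ?u1 = "ctrl d N \<phi> w t \<eta>1 \<Theta>1 \<omega> $ i" and ?u2 = "ctrl d N \<phi> w t \<eta>2 \<Theta>2 \<omega> $ i"
      have "\<bar>ctrl d N \<phi> w t ?e ?T \<omega> $ i\<bar> = \<bar>l * ?u1 + (1 - l) * ?u2\<bar>"
        by (simp add: index_ctrl_convex_comb[OF e1 e2 T1 T2 i])
      also have "\<dots> \<le> l * \<bar>?u1\<bar> + (1 - l) * \<bar>?u2\<bar>"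
        using abs_triangle_ineq[of "l * ?u1" "(1 - l) * ?u2"] l by (simp add: abs_mult)
      also have "\<dots> \<le> l * Umax + (1 - l) * Umax"
        using l elim i by (intro add_mono mult_left_mono) auto
      finally show "\<bar>ctrl d N \<phi> w t ?e ?T \<omega> $ i\<bar> \<le> Umax"
        by (simp add: algebra_simps)
    qed
  qed
  ultimately show ?thesis unfolding feasible_set_def using e1 e2 T1 T2 by auto
qed

lemma integral_stage_cost_convex:
  assumes e1: "\<eta>1 \<in> carrier_vec (N * m)" and e2: "\<eta>2 \<in> carrier_vec (N * m)"
    and T1: "\<Theta>1 \<in> carrier_mat (N * m) ((N - 1) * d)" and T2: "\<Theta>2 \<in> carrier_mat (N * m) ((N - 1) * d)"
    and x: "x \<in> carrier_vec d" and l: "0 \<le> l" "l \<le> 1"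
    and Qp: "\<And>v. 0 \<le> bilinear_form (\<lambda>a b. calQ d N Q Qf $$ (a,b)) (Suc N * d) v v"
    and Rp: "\<And>v. 0 \<le> bilinear_form (\<lambda>a b. calR m N R $$ (a,b)) (N * m) v v"
  shows "(\<integral>\<omega>. stage_cost d m N \<kappa> A B Q Qf R \<phi> w \<nu> t x (l \<cdot>\<^sub>v \<eta>1 + (1 - l) \<cdot>\<^sub>v \<eta>2) (l \<cdot>\<^sub>m \<Theta>1 + (1 - l) \<cdot>\<^sub>m \<Theta>2) \<omega> \<partial>M)
     \<le> l * (\<integral>\<omega>. stage_cost d m N \<kappa> A B Q Qf R \<phi> w \<nu> t x \<eta>1 \<Theta>1 \<omega> \<partial>M)
       + (1 - l) * (\<integral>\<omega>. stage_cost d m N \<kappa> A B Q Qf R \<phi> w \<nu> t x \<eta>2 \<Theta>2 \<omega> \<partial>M)"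
proof -
  let ?e = "l \<cdot>\<^sub>v \<eta>1 + (1 - l) \<cdot>\<^sub>v \<eta>2" and ?T = "l \<cdot>\<^sub>m \<Theta>1 + (1 - l) \<cdot>\<^sub>m \<Theta>2"
  have i1: "integrable M (stage_cost d m N \<kappa> A B Q Qf R \<phi> w \<nu> t x \<eta>1 \<Theta>1)"
    and i2: "integrable M (stage_cost d m N \<kappa> A B Q Qf R \<phi> w \<nu> t x \<eta>2 \<Theta>2)"
    and ic: "integrable M (stage_cost d m N \<kappa> A B Q Qf R \<phi> w \<nu> t x ?e ?T)"
    using e1 e2 T1 T2 x by (auto intro: integral_stage_cost_entries(1))
  have "(\<integral>\<omega>. stage_cost d m N \<kappa> A B Q Qf R \<phi> w \<nu> t x ?e ?T \<omega> \<partial>M)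
     \<le> (\<integral>\<omega>. l * stage_cost d m N \<kappa> A B Q Qf R \<phi> w \<nu> t x \<eta>1 \<Theta>1 \<omega>
            + (1 - l) * stage_cost d m N \<kappa> A B Q Qf R \<phi> w \<nu> t x \<eta>2 \<Theta>2 \<omega> \<partial>M)"
    by (rule integral_mono) (use ic i1 i2 stage_cost_convex[OF e1 e2 T1 T2 x l Qp Rp] in auto)
  also have "\<dots> = l * (\<integral>\<omega>. stage_cost d m N \<kappa> A B Q Qf R \<phi> w \<nu> t x \<eta>1 \<Theta>1 \<omega> \<partial>M)
      + (1 - l) * (\<integral>\<omega>. stage_cost d m N \<kappa> A B Q Qf R \<phi> w \<nu> t x \<eta>2 \<Theta>2 \<omega> \<partial>M)"
    using i1 i2 by simp
  finally show ?thesis .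
qed

lemma convex_problem_stage_cost:
  assumes x: "x \<in> carrier_vec d"
   and Qp: "\<And>v. 0 \<le> bilinear_form (\<lambda>a b. calQ d N Q Qf $$ (a,b)) (Suc N * d) v v"
   and Rp: "\<And>v. 0 \<le> bilinear_form (\<lambda>a b. calR m N R $$ (a,b)) (N * m) v v"
  shows "convex_problem (feasible_set M d m N Umax \<phi> w t)
        (\<lambda>(\<eta>, \<Theta>). \<integral>\<omega>. stage_cost d m N \<kappa> A B Q Qf R \<phi> w \<nu> t x \<eta> \<Theta> \<omega> \<partial>M)"
  unfolding convex_problem_def
proof (intro ballI allI impI conjI)
  fix a b and l :: real
  assume a: "a \<in> feasible_set M d m N Umax \<phi> w t" and b: "b \<in> feasible_set M d m N Umax \<phi> w t"
    and l: "0 \<le> l \<and> l \<le> 1"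
  obtain \<eta>1 \<Theta>1 \<eta>2 \<Theta>2 where ab: "a = (\<eta>1, \<Theta>1)" "b = (\<eta>2, \<Theta>2)"
    by fastforce
  have carriers: "\<eta>1 \<in> carrier_vec (N * m)" "\<eta>2 \<in> carrier_vec (N * m)"
    "\<Theta>1 \<in> carrier_mat (N * m) ((N - 1) * d)" "\<Theta>2 \<in> carrier_mat (N * m) ((N - 1) * d)"
    using a b ab unfolding feasible_set_def by auto
  show "comb l a b \<in> feasible_set M d m N Umax \<phi> w t"
    using feasible_set_convex a b l unfolding ab comb_def by simp
  show "(case comb l a b of (\<eta>, \<Theta>) \<Rightarrow> \<integral>\<omega>. stage_cost d m N \<kappa> A B Q Qf R \<phi> w \<nu> t x \<eta> \<Theta> \<omega> \<partial>M)
     \<le> l * (case a of (\<eta>, \<Theta>) \<Rightarrow> \<integral>\<omega>. stage_cost d m N \<kappa> A B Q Qf R \<phi> w \<nu> t x \<eta> \<Theta> \<omega> \<partial>M)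
       + (1 - l) * (case b of (\<eta>, \<Theta>) \<Rightarrow> \<integral>\<omega>. stage_cost d m N \<kappa> A B Q Qf R \<phi> w \<nu> t x \<eta> \<Theta> \<omega> \<partial>M)"
    using integral_stage_cost_convex[OF carriers x _ _ Qp Rp] l unfolding ab comb_def by simp
qed

lemma feasible_set_nonempty:
  assumes "0 < Umax"
  shows "feasible_set M d m N Umax \<phi> w t \<noteq> {}"
proof -
  have "(0\<^sub>v (N * m), 0\<^sub>m (N * m) ((N - 1) * d)) \<in> feasible_set M d m N Umax \<phi> w t"
    unfolding feasible_set_def strict_lower_block_def
    using assms by (auto simp: index_ctrl u_entry_def)
  then show ?thesis by auto
qed

lemma tightened_imp_feasible:
  assumes "\<eta> \<in> carrier_vec (N * m)" "\<Theta> \<in> carrier_mat (N * m) ((N - 1) * d)"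
    "strict_lower_block d m N \<Theta>" "tightened d m N Umax \<phi>max \<eta> \<Theta>"
  shows "(\<eta>, \<Theta>) \<in> feasible_set M d m N Umax \<phi> w t"
proof -
  have "\<forall>\<omega>. \<forall>i < N * m. \<bar>ctrl d N \<phi> w t \<eta> \<Theta> \<omega> $ i\<bar> \<le> Umax"
  proof (intro allI impI)
    fix \<omega> i assume i: "i < N * m"
    have "\<bar>ctrl d N \<phi> w t \<eta> \<Theta> \<omega> $ i\<bar> \<le> \<bar>\<eta> $ i\<bar> + (\<Sum>k<(N - 1) * d. \<bar>\<Theta> $$ (i,k)\<bar> * \<phi>max)"
      using index_ctrl[OF assms(1,2) i] abs_u_entry_le by simp
    also have "\<dots> = \<bar>\<eta> $ i\<bar> + (\<Sum>k<(N - 1) * d. \<bar>\<Theta> $$ (i,k)\<bar>) * \<phi>max"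
      by (simp add: sum_distrib_right)
    also have "\<dots> \<le> Umax" using assms(4) i unfolding tightened_def by auto
    finally show "\<bar>ctrl d N \<phi> w t \<eta> \<Theta> \<omega> $ i\<bar> \<le> Umax" .
  qed
  then show ?thesis unfolding feasible_set_def using assms by auto
qed

end

theorem theorem1:
  fixes M :: "'w measure"
    and d m N \<kappa> t :: nat
    and A B Q Qf R :: "real mat"
    and x :: "real Matrix.vec"
    and Umax p \<phi>max :: real
    and w :: "nat \<Rightarrow> 'w \<Rightarrow> nat \<Rightarrow> real"
    and \<nu> :: "nat \<Rightarrow> 'w \<Rightarrow> real"
    and \<phi> :: "nat \<Rightarrow> (nat \<Rightarrow> real) \<Rightarrow> nat \<Rightarrow> real"
  assumes P: "prob_space M"
    and dimA: "A \<in> carrier_mat d d" and dimB: "B \<in> carrier_mat d m"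
    and dimQ: "Q \<in> carrier_mat d d" and dimQf: "Qf \<in> carrier_mat d d"
    and dimR: "R \<in> carrier_mat m m"
    and Q_sym: "Q\<^sup>T = Q" and Q_psd: "\<forall>v \<in> carrier_vec d. 0 \<le> scalar_prod v (mult_mat_vec Q v)"
    and Qf_sym: "Qf\<^sup>T = Qf" and Qf_psd: "\<forall>v \<in> carrier_vec d. 0 \<le> scalar_prod v (mult_mat_vec Qf v)"
    and R_sym: "R\<^sup>T = R"
    and R_pd: "\<forall>v \<in> carrier_vec m. v \<noteq> 0\<^sub>v m \<longrightarrow> 0 < scalar_prod v (mult_mat_vec R v)"
    and kappa: "1 \<le> \<kappa>" "\<kappa> \<le> N"
    and Umax: "0 < Umax"
    and p: "0 < p" "p \<le> 1"
    and w_ident: "\<forall>s. distr M (PiM {..<d} (\<lambda>_. borel)) (\<lambda>\<omega>. restrict (w s \<omega>) {..<d})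
                     = distr M (PiM {..<d} (\<lambda>_. borel)) (\<lambda>\<omega>. restrict (w 0 \<omega>) {..<d})"
    and w_mean: "\<forall>s. \<forall>j < d. integrable M (\<lambda>\<omega>. w s \<omega> j) \<and> (\<integral>\<omega>. w s \<omega> j \<partial>M) = 0"
    and w_4th: "\<forall>s. \<forall>j < d. integrable M (\<lambda>\<omega>. (w s \<omega> j) ^ 4)"
    and w_symm: "\<forall>s. \<forall>j < d. distr M borel (\<lambda>\<omega>. w s \<omega> j) = distr M borel (\<lambda>\<omega>. - w s \<omega> j)"
    and nu_vals: "\<forall>s. \<forall>\<omega> \<in> space M. \<nu> s \<omega> \<in> {0, 1}"
    and nu_prob: "\<forall>s. measure M {\<omega> \<in> space M. \<nu> s \<omega> = 1} = p"
    and indep: "prob_space.indep_vars M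
                  (\<lambda>k. case k of Inl s \<Rightarrow> PiM {..<d} (\<lambda>_. borel) | Inr s \<Rightarrow> PiM {0} (\<lambda>_. borel))
                  (\<lambda>k \<omega>. case k of Inl s \<Rightarrow> restrict (w s \<omega>) {..<d}
                                 | Inr s \<Rightarrow> restrict (\<lambda>_. \<nu> s \<omega>) {0::nat})
                  (UNIV :: (nat + nat) set)"
    and phi_meas: "\<forall>i \<in> {1..N - 1}. (\<lambda>v. restrict (\<phi> i (restrict v {..<d})) {..<d})
                     \<in> PiM {..<d} (\<lambda>_. borel) \<rightarrow>\<^sub>M PiM {..<d} (\<lambda>_. borel)"
    and phi_odd: "\<forall>i \<in> {1..N - 1}. \<forall>v. \<forall>j < d.
                     \<phi> i (restrict (\<lambda>k. - v k) {..<d}) j = - \<phi> i (restrict v {..<d}) j"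
    and phi_bound: "\<forall>i \<in> {1..N - 1}. \<forall>v. \<forall>j < d. \<bar>\<phi> i v j\<bar> \<le> \<phi>max"
    and phi_mean: "\<forall>i \<in> {1..N - 1}. \<forall>s. \<forall>j < d.
                     (\<integral>\<omega>. \<phi> i (restrict (w s \<omega>) {..<d}) j \<partial>M) = 0"
    and t: "\<kappa> dvd t"
    and x: "x \<in> carrier_vec d"
  shows
    "convex_problem (feasible_set M d m N Umax \<phi> w t)
        (\<lambda>(\<eta>, \<Theta>). \<integral>\<omega>. stage_cost d m N \<kappa> A B Q Qf R \<phi> w \<nu> t x \<eta> \<Theta> \<omega> \<partial>M)
     \<and> feasible_set M d m N Umax \<phi> w t \<noteq> {}
     \<and> (\<forall>\<eta> \<Theta>. \<eta> \<in> carrier_vec (N * m) \<and> \<Theta> \<in> carrier_mat (N * m) ((N - 1) * d)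
           \<and> strict_lower_block d m N \<Theta> \<longrightarrow>
          integrable M (stage_cost d m N \<kappa> A B Q Qf R \<phi> w \<nu> t x \<eta> \<Theta>)
          \<and> (\<integral>\<omega>. stage_cost d m N \<kappa> A B Q Qf R \<phi> w \<nu> t x \<eta> \<Theta> \<omega> \<partial>M)
             = tractable_obj M d m N \<kappa> A B Q Qf R \<phi> w \<nu> t x \<eta> \<Theta>)
     \<and> (\<forall>\<eta> \<Theta>. \<eta> \<in> carrier_vec (N * m) \<and> \<Theta> \<in> carrier_mat (N * m) ((N - 1) * d)
           \<and> strict_lower_block d m N \<Theta> \<and> tightened d m N Umax \<phi>max \<eta> \<Theta> \<longrightarrow>
          (\<eta>, \<Theta>) \<in> feasible_set M d m N Umax \<phi> w t)"
proof -
  interpret tp1_setting M d m N \<kappa> t w \<nu> \<phi> \<phi>max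
    by (intro tp1_setting.intro tp1_setting_axioms.intro P nu_vals indep phi_meas phi_bound phi_mean w_mean w_4th)
  have calQ_nonneg: "0 \<le> bilinear_form (\<lambda>a b. calQ d N Q Qf $$ (a,b)) (Suc N * d) v v" for v
    by (rule calQ_psd[OF dimQ dimQf Q_psd Qf_psd])
  have calR_nonneg: "0 \<le> bilinear_form (\<lambda>a b. calR m N R $$ (a,b)) (N * m) v v" for v
    by (rule calR_psd[OF dimR R_pd])
  show ?thesis
    using convex_problem_stage_cost[OF x calQ_nonneg calR_nonneg] feasible_set_nonempty[OF Umax]
      integral_stage_cost_entries(1)[OF _ _ x]
      integral_stage_cost_eq_tractable_obj[OF _ _ x dimQ dimQf Q_sym Qf_sym]
      tightened_imp_feasible
    by blast
qed

end
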